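(* Let $\{\Lambda_i\}_{i=1}^N$ be i.i.d. positive random variables with common distribution function $F_\Lambda$, and let $\Lambda$ denote a generic copy. Suppose there exist constants $c>0$ and $\tau>3$ such that $1-F_\Lambda(x)\le c x^{1-\tau}$ for all $x\ge0$, and that $\nu:=\mathbb E[\Lambda^2]/\mathbb E[\Lambda]>1$. Then there exists an event $\mathcal J$, which occurs with probability tending to $1$ as $N\to\infty$, such that conditionally on $\{\Lambda_i\}_{i=1}^N$ satisfying $\mathcal J$, the capacities $\lambda_i=\Lambda_i$ satisfy conditions (C1)–(C3) with $$\mu=\mathbb E[\Lambda],\quad \nu=\frac{\mathbb E[\Lambda^2]}{\mathbb E[\Lambda]},\quad f_n=\mathbb E\Big[e^{-\Lambda}\frac{\Lambda^n}{n!}\Big],\quad g_n=\frac1\mu\mathbb E\Big[e^{-\Lambda}\frac{\Lambda^{n+1}}{n!}\Big]\quad(n\ge0).$$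
   Context: For capacities $\lambda_1,\dots,\lambda_N>0$ (here random: $\lambda_i=\Lambda_i$): $\mu_N=\frac1N\sum_i\lambda_i$, $\nu_N=\sum_i\lambda_i^2/\sum_i\lambda_i$, $f^{(N)}_n=\frac1N\sum_{i} e^{-\lambda_i}\frac{\lambda_i^n}{n!}$, $g^{(N)}_n=\frac{1}{N\mu_N}\sum_{i} e^{-\lambda_i}\frac{\lambda_i^{n+1}}{n!}$ ($n\ge0$); $d_{TV}(p,q)=\frac12\sum_j|p_j-q_j|$. (C1): there are $\mu\in(0,\infty)$, $\nu\in(1,\infty)$, $\alpha_1>0$ with $|\mu_N-\mu|=O(N^{-\alpha_1})$, $|\nu_N-\nu|=O(N^{-\alpha_1})$. (C2): there are sequences $\{f_n\}$, $\{g_n\}$ independent of $N$ and $\alpha_2>0$ with $d_{TV}(f^{(N)},f)=O(N^{-\alpha_2})$, $d_{TV}(g^{(N)},g)=O(N^{-\alpha_2})$. (C3): there is $\tau>3$ such that for every $\varepsilon>0$ (with $\gamma:=\frac1{\tau-1}+\varepsilon<\frac12$), $\limsup_N\frac1N\sum_i\lambda_i^{\tau-1-\varepsilon}<\infty$ and $\max_i\lambda_i\le N^\gamma$. *)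

theory Defs
  imports "HOL-Probability.Probability"
begin

text \<open>Capacity vectors: for system size N the capacities are lam 0, ..., lam (N-1).\<close>

definition cap_mu :: "(nat \<Rightarrow> real) \<Rightarrow> nat \<Rightarrow> real" where
  "cap_mu lam N = (\<Sum>i<N. lam i) / real N"

definition cap_nu :: "(nat \<Rightarrow> real) \<Rightarrow> nat \<Rightarrow> real" where
  "cap_nu lam N = (\<Sum>i<N. (lam i)^2) / (\<Sum>i<N. lam i)"

definition cap_f :: "(nat \<Rightarrow> real) \<Rightarrow> nat \<Rightarrow> nat \<Rightarrow> real" where
  "cap_f lam N n = (\<Sum>i<N. exp (- lam i) * (lam i)^n / fact n) / real N"

definition cap_g :: "(nat \<Rightarrow> real) \<Rightarrow> nat \<Rightarrow> nat \<Rightarrow> real" where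
  "cap_g lam N n = (\<Sum>i<N. exp (- lam i) * (lam i)^(n+1) / fact n) / (real N * cap_mu lam N)"

definition dTV :: "(nat \<Rightarrow> real) \<Rightarrow> (nat \<Rightarrow> real) \<Rightarrow> real" where
  "dTV p q = (\<Sum>j. \<bar>p j - q j\<bar>) / 2"

text \<open>Conditions (C1)-(C3), required uniformly over a family S N of admissible
  capacity vectors for each system size N (the O-constants, exponents and thresholds
  do not depend on the particular vector).\<close>

definition cond_C1 :: "real \<Rightarrow> real \<Rightarrow> (nat \<Rightarrow> (nat \<Rightarrow> real) set) \<Rightarrow> bool" where
  "cond_C1 \<mu> \<nu> S \<longleftrightarrow> 0 < \<mu> \<and> 1 < \<nu> \<and>
     (\<exists>\<alpha>1 C N0. 0 < \<alpha>1 \<and> (\<forall>N\<ge>N0. \<forall>lam\<in>S N.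
        \<bar>cap_mu lam N - \<mu>\<bar> \<le> C * real N powr (-\<alpha>1) \<and>
        \<bar>cap_nu lam N - \<nu>\<bar> \<le> C * real N powr (-\<alpha>1)))"

definition cond_C2 :: "(nat \<Rightarrow> real) \<Rightarrow> (nat \<Rightarrow> real) \<Rightarrow> (nat \<Rightarrow> (nat \<Rightarrow> real) set) \<Rightarrow> bool" where
  "cond_C2 f g S \<longleftrightarrow>
     (\<exists>\<alpha>2 C N0. 0 < \<alpha>2 \<and> (\<forall>N\<ge>N0. \<forall>lam\<in>S N.
        dTV (cap_f lam N) f \<le> C * real N powr (-\<alpha>2) \<and>
        dTV (cap_g lam N) g \<le> C * real N powr (-\<alpha>2)))"

definition cond_C3 :: "(nat \<Rightarrow> (nat \<Rightarrow> real) set) \<Rightarrow> bool" where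
  "cond_C3 S \<longleftrightarrow> (\<exists>\<tau>::real. 3 < \<tau> \<and>
     (\<forall>\<epsilon>>0. 1 / (\<tau> - 1) + \<epsilon> < 1/2 \<longrightarrow>
        (\<exists>K N0. \<forall>N\<ge>N0. \<forall>lam\<in>S N.
            (\<Sum>i<N. lam i powr (\<tau> - 1 - \<epsilon>)) / real N \<le> K \<and>
            (\<forall>i<N. lam i \<le> real N powr (1 / (\<tau> - 1) + \<epsilon>)))))"

end

theory Submission
  imports Defs
begin

text \<open>Conditions (C1)--(C3) are laws of large numbers, with polynomial rates, for finitely many
  empirical averages of the capacities. Choose exponents \<open>2 < \<sigma> < \<rho> < \<tau> - 1\<close>; the tail bound
  makes the moment of order \<open>\<rho>\<close> finite. With probability tending to one no capacity exceeds the
  level \<open>N powr (1 / \<sigma>)\<close>, and, by Chebyshev's inequality, each of the following empirical averages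
  lies within a negative power of \<open>N\<close> of its expectation: \<open>\<Lambda>\<close>; \<open>\<Lambda>\<^sup>2\<close> and \<open>\<Lambda> powr \<sigma>\<close> truncated at
  the level, whose variances are controlled by the \<open>\<rho>\<close>-th moment and a power of the level; and
  the Poisson weights \<open>exp (- \<Lambda>) * \<Lambda> ^ n / fact n\<close> and \<open>\<Lambda> * exp (- \<Lambda>) * \<Lambda> ^ n / fact n\<close> for
  \<open>n \<le> N powr (1 / 8)\<close>. The Poisson tails beyond \<open>N powr (1 / 8)\<close> carry mass \<open>O (N powr (- 1 / 8))\<close>,
  which yields the total variation bounds of (C2). Condition (C3) is obtained with its exponent
  \<open>\<tau>\<close> taken to be \<open>\<sigma> + 1\<close>, not the \<open>\<tau>\<close> of the tail bound.\<close>

section \<open>Poisson weights\<close>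

definition poisson_weight :: "nat \<Rightarrow> real \<Rightarrow> real" where
  "poisson_weight n x = exp (- x) * x ^ n / fact n"

lemma poisson_weight_nonneg: "0 \<le> x \<Longrightarrow> 0 \<le> poisson_weight n x"
  by (simp add: poisson_weight_def)

lemma borel_measurable_poisson_weight [measurable]: "poisson_weight n \<in> borel_measurable borel"
  unfolding poisson_weight_def by measurable

lemma sum_poisson_weight_le_1:
  assumes "0 \<le> x" "finite F"
  shows "(\<Sum>n\<in>F. poisson_weight n x) \<le> 1"
proof -
  have exp_sums: "(\<lambda>n. x ^ n / fact n) sums exp x"
    using exp_converges[of x] by (simp add: divide_inverse mult.commute)
  have "(\<Sum>n\<in>F. x ^ n / fact n) \<le> exp x"
    using sum_le_suminf[OF sums_summable[OF exp_sums] assms(2)] assms(1) sums_unique[OF exp_sums]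
    by auto
  then have "exp (- x) * (\<Sum>n\<in>F. x ^ n / fact n) \<le> exp (- x) * exp x"
    by (intro mult_left_mono) auto
  then show ?thesis
    by (simp add: poisson_weight_def sum_distrib_left exp_minus field_simps)
qed

lemma poisson_weight_le_1: "0 \<le> x \<Longrightarrow> poisson_weight n x \<le> 1"
  using sum_poisson_weight_le_1[of x "{n}"] by simp

text \<open>Each weight of index at least \<open>m\<close> is at most \<open>x / m\<close> times its predecessor.\<close>

lemma sum_poisson_weight_tail_le:
  assumes "0 \<le> x" "finite F" "0 < m" "\<And>n. n \<in> F \<Longrightarrow> m \<le> n"
  shows "(\<Sum>n\<in>F. poisson_weight n x) \<le> x / real m"
proof -
  have step: "poisson_weight n x \<le> x / real m * poisson_weight (n - 1) x" if n: "n \<in> F" for n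
  proof -
    obtain k where k: "n = Suc k"
      using assms(3) assms(4)[OF n] by (cases n) auto
    have "poisson_weight n x = x / real n * poisson_weight k x"
      by (simp add: k poisson_weight_def field_simps)
    also have "\<dots> \<le> x / real m * poisson_weight k x"
      using assms(1,3) assms(4)[OF n] k
      by (intro mult_right_mono divide_left_mono poisson_weight_nonneg) auto
    finally show ?thesis by (simp add: k)
  qed
  have inj: "inj_on (\<lambda>n. n - 1) F"
    using assms(3,4) by (intro inj_onI) (metis Suc_diff_1 less_le_trans)
  have "(\<Sum>n\<in>F. poisson_weight n x) \<le> x / real m * (\<Sum>n\<in>F. poisson_weight (n - 1) x)"
    using step by (simp add: sum_distrib_left sum_mono)
  also have "(\<Sum>n\<in>F. poisson_weight (n - 1) x) = (\<Sum>k\<in>(\<lambda>n. n - 1) ` F. poisson_weight k x)"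
    using inj by (simp add: sum.reindex)
  also have "x / real m * \<dots> \<le> x / real m * 1"
    using assms by (intro mult_left_mono sum_poisson_weight_le_1) auto
  finally show ?thesis by simp
qed

lemma mult_sum_poisson_weight_tail_le:
  assumes "0 < x" "finite F" "0 < m" "\<And>n. n \<in> F \<Longrightarrow> m \<le> n"
  shows "(\<Sum>n\<in>F. x * poisson_weight n x) \<le> x\<^sup>2 / real m"
proof -
  have "(\<Sum>n\<in>F. x * poisson_weight n x) \<le> x * (x / real m)"
    unfolding sum_distrib_left [symmetric]
    using assms by (intro mult_left_mono sum_poisson_weight_tail_le) auto
  then show ?thesis
    by (simp add: power2_eq_square)
qed

lemma poisson_weight_square_le:
  assumes "0 \<le> x"
  shows "(poisson_weight n x)\<^sup>2 \<le> 1 + x\<^sup>2" "(x * poisson_weight n x)\<^sup>2 \<le> 1 + x\<^sup>2"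
proof -
  have "(poisson_weight n x)\<^sup>2 \<le> 1"
    using assms poisson_weight_nonneg[of x n] poisson_weight_le_1[of x n] by (simp add: power_le_one)
  moreover have "(x * poisson_weight n x)\<^sup>2 = x\<^sup>2 * (poisson_weight n x)\<^sup>2"
    by (simp add: power_mult_distrib)
  moreover have "0 \<le> x\<^sup>2"
    by simp
  ultimately show "(poisson_weight n x)\<^sup>2 \<le> 1 + x\<^sup>2" "(x * poisson_weight n x)\<^sup>2 \<le> 1 + x\<^sup>2"
    using mult_left_mono[of "(poisson_weight n x)\<^sup>2" 1 "x\<^sup>2"] by linarith+
qed

lemma abs_divide_diff_divide_le:
  fixes a m x y e :: real
  assumes "0 < m" "m / 2 \<le> a" "\<bar>a - m\<bar> \<le> e" "0 \<le> y"
  shows "\<bar>x / a - y / m\<bar> \<le> 2 / m * \<bar>x - y\<bar> + 2 / m\<^sup>2 * y * e"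
proof -
  have a: "0 < a" "1 / a \<le> 2 / m"
    using assms(1,2) by (auto simp: field_simps)
  have "x / a - y / m = (x - y) * (1 / a) + y * (m - a) * (1 / a) * (1 / m)"
    using a assms(1) by (simp add: field_simps)
  then have "\<bar>x / a - y / m\<bar> \<le> \<bar>x - y\<bar> * (1 / a) + y * \<bar>a - m\<bar> * (1 / a) * (1 / m)"
    using a assms(1,4) by (simp add: abs_mult abs_minus_commute abs_triangle_ineq [THEN order_trans])
  also have "\<dots> \<le> \<bar>x - y\<bar> * (2 / m) + y * e * (2 / m) * (1 / m)"
    using a assms by (intro add_mono mult_left_mono mult_right_mono mult_mono) auto
  finally show ?thesis by (simp add: power2_eq_square field_simps)
qed

lemma dTV_le_head_tail:
  fixes x y :: "nat \<Rightarrow> real"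
  assumes "\<And>n. 0 \<le> x n" "\<And>n. 0 \<le> y n"
    and head: "(\<Sum>n\<le>n0. \<bar>x n - y n\<bar>) \<le> D"
    and tail_x: "\<And>K. (\<Sum>n\<in>{n0<..<K}. x n) \<le> A"
    and tail_y: "\<And>K. (\<Sum>n\<in>{n0<..<K}. y n) \<le> B"
  shows "dTV x y \<le> (D + A + B) / 2"
proof -
  have "(\<Sum>n<K. \<bar>x n - y n\<bar>) \<le> D + A + B" for K
  proof -
    have "(\<Sum>n<K. \<bar>x n - y n\<bar>) \<le> (\<Sum>n\<in>{..n0} \<union> {n0<..<K}. \<bar>x n - y n\<bar>)"
      by (intro sum_mono2) auto
    also have "\<dots> = (\<Sum>n\<le>n0. \<bar>x n - y n\<bar>) + (\<Sum>n\<in>{n0<..<K}. \<bar>x n - y n\<bar>)"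
      by (subst sum.union_disjoint) auto
    also have "(\<Sum>n\<in>{n0<..<K}. \<bar>x n - y n\<bar>) \<le> (\<Sum>n\<in>{n0<..<K}. x n) + (\<Sum>n\<in>{n0<..<K}. y n)"
      using assms(1,2) by (simp add: sum.distrib [symmetric] sum_mono abs_diff_le_iff)
    finally show ?thesis
      using head tail_x[of K] tail_y[of K] by linarith
  qed
  then have "(\<Sum>n. \<bar>x n - y n\<bar>) \<le> D + A + B"
    by (intro suminf_le_const summableI_nonneg_bounded) auto
  then show ?thesis
    by (simp add: dTV_def)
qed

lemma tendsto_zero_of_powr_bound:
  fixes u :: "nat \<Rightarrow> real"
  assumes "e < 0" and bound: "\<And>N. 0 < N \<Longrightarrow> \<bar>u N\<bar> \<le> C * real N powr e"
  shows "u \<longlonglongrightarrow> 0"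
proof (rule Lim_null_comparison)
  show "\<forall>\<^sub>F N in sequentially. norm (u N) \<le> C * real N powr e"
    using eventually_gt_at_top[of 0] by eventually_elim (simp add: bound)
  show "(\<lambda>N. C * real N powr e) \<longlonglongrightarrow> 0"
    using tendsto_mult_right_zero[OF tendsto_neg_powr[OF assms(1) filterlim_real_sequentially]] .
qed

lemma powr_divide_mult_square:
  fixes x :: real
  assumes "0 < x" "e = a - 1 - 2 * b"
  shows "C * x powr a / (x * (x powr b)\<^sup>2) = C * x powr e"
  using assms by (simp add: powr_diff powr_add powr_power mult.commute)

section \<open>Moments from a power-law tail\<close>

lemma ex_dyadic_bracket:
  fixes y :: real
  assumes "1 < y"
  shows "\<exists>k. 2 ^ k < y \<and> y \<le> 2 ^ Suc k"
proof -
  obtain n where "y \<le> 2 ^ n"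
    using real_arch_pow[of 2 y] by (auto intro: less_imp_le)
  then show ?thesis
  proof (induction n)
    case 0
    with assms show ?case by simp
  next
    case (Suc n)
    show ?case
    proof (cases "y \<le> 2 ^ n")
      case True
      with Suc.IH show ?thesis by blast
    next
      case False
      with Suc.prems show ?thesis by (intro exI[of _ n]) auto
    qed
  qed
qed

lemma powr_le_dyadic_sum:
  fixes y r :: real
  assumes "0 \<le> y" "0 \<le> r"
  shows "ennreal (y powr r) \<le> 1 + (\<Sum>k. ennreal ((2 powr r) ^ Suc k) * indicator {2 ^ k <..} y)"
proof (cases "y \<le> 1")
  case True
  then have "y powr r \<le> 1"
    using assms by (cases "y = 0") (auto intro: powr_le1)
  then show ?thesis
    by (simp add: ennreal_le_1 add_increasing2)
next
  case False
  then obtain k where k: "2 ^ k < y" "y \<le> 2 ^ Suc k"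
    using ex_dyadic_bracket[of y] by auto
  define F where "F = (\<lambda>j. ennreal ((2 powr r) ^ Suc j) * indicator {2 ^ j <..} y)"
  have "y powr r \<le> (2 ^ Suc k) powr r"
    using k assms by (intro powr_mono2) auto
  also have "\<dots> = (2 powr r) ^ Suc k"
    by (simp add: powr_power powr_powr powr_realpow [symmetric] mult.commute del: power_Suc)
  finally have "ennreal (y powr r) \<le> F k"
    using k by (simp add: F_def ennreal_leI)
  also have "\<dots> \<le> suminf F"
    using sum_le_suminf[OF summableI, of "{k}" F] by simp
  also have "\<dots> \<le> 1 + suminf F"
    by (simp add: add_increasing)
  finally show ?thesis
    unfolding F_def .
qed

lemma (in prob_space) integrable_powr_of_tail_bound:
  fixes X :: "'a \<Rightarrow> real"
  assumes [measurable]: "X \<in> borel_measurable M"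
    and nonneg: "\<And>\<omega>. \<omega> \<in> space M \<Longrightarrow> 0 \<le> X \<omega>"
    and tail: "\<And>x. 0 < x \<Longrightarrow> prob {\<omega>\<in>space M. x < X \<omega>} \<le> c * x powr (- t)"
    and "0 \<le> r" "r < t"
  shows "integrable M (\<lambda>\<omega>. X \<omega> powr r)"
proof (rule integrableI_nonneg)
  define q where "q = 2 powr r * 2 powr (- t)"
  have q: "0 \<le> q" "q < 1"
    using assms(4,5) by (auto simp: q_def powr_add [symmetric] intro: powr_less_one)
  have c: "0 \<le> c"
    using order_trans[OF measure_nonneg tail[of 1]] by simp
  have term_le: "ennreal ((2 powr r) ^ Suc k) * emeasure M {\<omega>\<in>space M. 2 ^ k < X \<omega>}
      \<le> ennreal (c * 2 powr r * q ^ k)" for k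
  proof -
    have "prob {\<omega>\<in>space M. 2 ^ k < X \<omega>} \<le> c * (2 powr (- t)) ^ k"
      using tail[of "2 ^ k"] by (simp add: powr_power powr_realpow [symmetric] powr_powr mult.commute)
    then have "(2 powr r) ^ Suc k * prob {\<omega>\<in>space M. 2 ^ k < X \<omega>} \<le> c * 2 powr r * q ^ k"
      by (auto simp: q_def power_mult_distrib mult_ac intro: mult_left_mono [THEN order_trans])
    then show ?thesis
      by (simp add: emeasure_eq_measure ennreal_mult [symmetric] ennreal_leI)
  qed
  have "(\<integral>\<^sup>+\<omega>. ennreal (X \<omega> powr r) \<partial>M)
      \<le> (\<integral>\<^sup>+\<omega>. 1 + (\<Sum>k. ennreal ((2 powr r) ^ Suc k) * indicator {\<omega>\<in>space M. 2 ^ k < X \<omega>} \<omega>) \<partial>M)"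
    using nonneg assms(4)
    by (intro nn_integral_mono) (auto simp: indicator_def intro!: powr_le_dyadic_sum [THEN order_trans])
  also have "\<dots> = 1 + (\<Sum>k. ennreal ((2 powr r) ^ Suc k) * emeasure M {\<omega>\<in>space M. 2 ^ k < X \<omega>})"
    by (simp add: nn_integral_add nn_integral_suminf nn_integral_cmult_indicator emeasure_space_1)
  also have "\<dots> \<le> 1 + (\<Sum>k. ennreal (c * 2 powr r * q ^ k))"
    by (intro add_left_mono suminf_le summableI term_le)
  also have "\<dots> = 1 + ennreal (c * 2 powr r * (1 / (1 - q)))"
    using q c sums_mult[OF geometric_sums[of q], of "c * 2 powr r"]
    by (subst suminf_ennreal_eq) auto
  also have "\<dots> < \<infinity>"
    by (simp add: ennreal_add_eq_top less_top [symmetric])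
  finally show "(\<integral>\<^sup>+\<omega>. ennreal (X \<omega> powr r) \<partial>M) < \<infinity>" .
qed simp_all

section \<open>Chebyshev's inequality for i.i.d.\ averages\<close>

lemma integrable_mult_of_square_integrable:
  fixes f g :: "'a \<Rightarrow> real"
  assumes [measurable]: "f \<in> borel_measurable M" "g \<in> borel_measurable M"
    and "integrable M (\<lambda>x. (f x)\<^sup>2)" "integrable M (\<lambda>x. (g x)\<^sup>2)"
  shows "integrable M (\<lambda>x. f x * g x)"
proof (rule Bochner_Integration.integrable_bound)
  show "integrable M (\<lambda>x. (f x)\<^sup>2 + (g x)\<^sup>2)"
    using assms(3,4) by simp
  have "\<bar>a * b\<bar> \<le> a\<^sup>2 + b\<^sup>2" for a b :: real
  proof -
    have "2 * (\<bar>a\<bar> * \<bar>b\<bar>) \<le> a\<^sup>2 + b\<^sup>2"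
      using sum_squares_bound[of "\<bar>a\<bar>" "\<bar>b\<bar>"] by (simp add: mult.assoc)
    then show ?thesis
      unfolding abs_mult using mult_nonneg_nonneg[OF abs_ge_zero abs_ge_zero, of a b] by linarith
  qed
  then show "AE x in M. norm (f x * g x) \<le> norm ((f x)\<^sup>2 + (g x)\<^sup>2)"
    by simp
qed measurable

lemma (in prob_space) integral_square_sum_indep:
  fixes Z :: "'i \<Rightarrow> 'a \<Rightarrow> real"
  assumes indep: "indep_vars (\<lambda>_. borel) Z I" and F: "finite F" "F \<subseteq> I"
    and square_int: "\<And>i. i \<in> F \<Longrightarrow> integrable M (\<lambda>\<omega>. (Z i \<omega>)\<^sup>2)"
    and centered: "\<And>i. i \<in> F \<Longrightarrow> expectation (Z i) = 0"
  shows "expectation (\<lambda>\<omega>. (\<Sum>i\<in>F. Z i \<omega>)\<^sup>2) = (\<Sum>i\<in>F. expectation (\<lambda>\<omega>. (Z i \<omega>)\<^sup>2))"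
proof -
  have meas [measurable]: "Z i \<in> borel_measurable M" if "i \<in> F" for i
    using indep that F(2) by (auto simp: indep_vars_def)
  have prod_int: "integrable M (\<lambda>\<omega>. Z i \<omega> * Z j \<omega>)" if "i \<in> F" "j \<in> F" for i j
    using that by (intro integrable_mult_of_square_integrable meas square_int)
  have uncorrelated: "expectation (\<lambda>\<omega>. Z i \<omega> * Z j \<omega>) = 0" if "i \<in> F" "j \<in> F" "i \<noteq> j" for i j
  proof -
    have "integrable M (Z k)" if "k \<in> F" for k
      using square_integrable_imp_integrable[OF meas[OF that] square_int[OF that]] .
    then have "expectation (\<lambda>\<omega>. \<Prod>k\<in>{i, j}. Z k \<omega>) = (\<Prod>k\<in>{i, j}. expectation (Z k))"
      using \<open>i \<in> F\<close> \<open>j \<in> F\<close> F(2)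
      by (intro indep_vars_lebesgue_integral indep_vars_subset[OF indep]) auto
    then show ?thesis
      using that centered by simp
  qed
  have "expectation (\<lambda>\<omega>. (\<Sum>i\<in>F. Z i \<omega>)\<^sup>2) = (\<Sum>i\<in>F. \<Sum>j\<in>F. expectation (\<lambda>\<omega>. Z i \<omega> * Z j \<omega>))"
    using prod_int by (simp add: power2_eq_square sum_product Bochner_Integration.integral_sum)
  also have "\<dots> = (\<Sum>i\<in>F. \<Sum>j\<in>{i}. expectation (\<lambda>\<omega>. Z i \<omega> * Z j \<omega>))"
    using F(1) uncorrelated by (intro sum.cong refl sum.mono_neutral_right) auto
  finally show ?thesis
    by (simp add: power2_eq_square)
qed

locale iid_sequence = prob_space M for M :: "'a measure" +
  fixes \<Lambda> :: "nat \<Rightarrow> 'a \<Rightarrow> real"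
  assumes measurable_\<Lambda> [measurable]: "\<And>i. \<Lambda> i \<in> borel_measurable M"
    and indep: "indep_vars (\<lambda>_. borel) \<Lambda> UNIV"
    and ident: "\<And>i. distr M borel (\<Lambda> i) = distr M borel (\<Lambda> 0)"
begin

lemma
  fixes h :: "real \<Rightarrow> real"
  assumes [measurable]: "h \<in> borel_measurable borel" and int: "integrable M (\<lambda>\<omega>. h (\<Lambda> 0 \<omega>))"
  shows integrable_comp_\<Lambda>: "integrable M (\<lambda>\<omega>. h (\<Lambda> i \<omega>))"
    and integral_comp_\<Lambda>: "expectation (\<lambda>\<omega>. h (\<Lambda> i \<omega>)) = expectation (\<lambda>\<omega>. h (\<Lambda> 0 \<omega>))"
proof -
  show "integrable M (\<lambda>\<omega>. h (\<Lambda> i \<omega>))"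
    using int ident[of i] integrable_distr_eq[of "\<Lambda> i" M borel h] integrable_distr_eq[of "\<Lambda> 0" M borel h]
    by simp
  show "expectation (\<lambda>\<omega>. h (\<Lambda> i \<omega>)) = expectation (\<lambda>\<omega>. h (\<Lambda> 0 \<omega>))"
    using ident[of i] integral_distr[of "\<Lambda> i" M borel h] integral_distr[of "\<Lambda> 0" M borel h]
    by simp
qed

lemma prob_comp_\<Lambda>:
  assumes "A \<in> sets borel"
  shows "prob {\<omega>\<in>space M. \<Lambda> i \<omega> \<in> A} = prob {\<omega>\<in>space M. \<Lambda> 0 \<omega> \<in> A}"
  using assms ident[of i] measure_distr[of "\<Lambda> i" M borel A] measure_distr[of "\<Lambda> 0" M borel A]
  by (simp add: vimage_def Int_def conj_commute)

text \<open>The centred summands are independent, so the second moment of their sum is the sum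
  of their variances.\<close>

lemma
  fixes h :: "real \<Rightarrow> real"
  assumes [measurable]: "h \<in> borel_measurable borel"
    and square_int: "integrable M (\<lambda>\<omega>. (h (\<Lambda> 0 \<omega>))\<^sup>2)"
  defines "Z \<equiv> \<lambda>i \<omega>. h (\<Lambda> i \<omega>) - expectation (\<lambda>\<omega>. h (\<Lambda> 0 \<omega>))"
  shows integrable_centred_sum_square: "integrable M (\<lambda>\<omega>. (\<Sum>i<N. Z i \<omega>)\<^sup>2)"
    and integral_centred_sum_square_le:
      "expectation (\<lambda>\<omega>. (\<Sum>i<N. Z i \<omega>)\<^sup>2) \<le> real N * expectation (\<lambda>\<omega>. (h (\<Lambda> 0 \<omega>))\<^sup>2)"
proof -
  have h_square_meas: "(\<lambda>x. (h x)\<^sup>2) \<in> borel_measurable borel"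
    by measurable
  have int0: "integrable M (\<lambda>\<omega>. h (\<Lambda> 0 \<omega>))"
    by (rule square_integrable_imp_integrable[OF _ square_int]) measurable
  note int = integrable_comp_\<Lambda>[OF assms(1) int0]
    and eq = integral_comp_\<Lambda>[OF assms(1) int0]
    and square_int_i = integrable_comp_\<Lambda>[OF h_square_meas square_int]
    and square_eq = integral_comp_\<Lambda>[OF h_square_meas square_int]
  have Z_meas [measurable]: "Z i \<in> borel_measurable M" for i
    unfolding Z_def by measurable
  have Z_square_int: "integrable M (\<lambda>\<omega>. (Z i \<omega>)\<^sup>2)" for i
    unfolding Z_def power2_diff
    using int[of i] square_int_i[of i] by (intro Bochner_Integration.integrable_diff) auto
  show "integrable M (\<lambda>\<omega>. (\<Sum>i<N. Z i \<omega>)\<^sup>2)"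
    unfolding power2_eq_square sum_product
    by (intro Bochner_Integration.integrable_sum integrable_mult_of_square_integrable Z_meas Z_square_int)
  have Z_centred: "expectation (Z i) = 0" for i
    unfolding Z_def using int[of i] eq[of i] by (simp add: prob_space)
  have Z_var: "expectation (\<lambda>\<omega>. (Z i \<omega>)\<^sup>2)
      = expectation (\<lambda>\<omega>. (h (\<Lambda> 0 \<omega>))\<^sup>2) - (expectation (\<lambda>\<omega>. h (\<Lambda> 0 \<omega>)))\<^sup>2" for i
    unfolding Z_def power2_diff using int[of i] square_int_i[of i] eq[of i] square_eq[of i]
    by (simp add: prob_space power2_eq_square)
  have indep_Z: "indep_vars (\<lambda>_. borel) Z UNIV"
    unfolding Z_def
    by (rule indep_vars_compose2[OF indep, where Y = "\<lambda>_ x. h x - expectation (\<lambda>\<omega>. h (\<Lambda> 0 \<omega>))"])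
      measurable
  have "expectation (\<lambda>\<omega>. (\<Sum>i<N. Z i \<omega>)\<^sup>2) = (\<Sum>i<N. expectation (\<lambda>\<omega>. (Z i \<omega>)\<^sup>2))"
    using Z_square_int Z_centred by (intro integral_square_sum_indep[OF indep_Z]) auto
  also have "\<dots> \<le> real N * expectation (\<lambda>\<omega>. (h (\<Lambda> 0 \<omega>))\<^sup>2)"
    by (simp add: Z_var right_diff_distrib)
  finally show "expectation (\<lambda>\<omega>. (\<Sum>i<N. Z i \<omega>)\<^sup>2) \<le> real N * expectation (\<lambda>\<omega>. (h (\<Lambda> 0 \<omega>))\<^sup>2)" .
qed

lemma prob_empirical_mean_deviation_le:
  fixes h :: "real \<Rightarrow> real"
  assumes [measurable]: "h \<in> borel_measurable borel"
    and square_int: "integrable M (\<lambda>\<omega>. (h (\<Lambda> 0 \<omega>))\<^sup>2)"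
    and "0 < N" "0 < \<delta>"
  shows "prob {\<omega>\<in>space M. \<delta> \<le> \<bar>(\<Sum>i<N. h (\<Lambda> i \<omega>)) / real N - expectation (\<lambda>\<omega>. h (\<Lambda> 0 \<omega>))\<bar>}
    \<le> expectation (\<lambda>\<omega>. (h (\<Lambda> 0 \<omega>))\<^sup>2) / (real N * \<delta>\<^sup>2)"
proof -
  define m where "m = expectation (\<lambda>\<omega>. h (\<Lambda> 0 \<omega>))"
  define S where "S \<omega> = (\<Sum>i<N. h (\<Lambda> i \<omega>) - m)" for \<omega>
  have S_square_int: "integrable M (\<lambda>\<omega>. (S \<omega>)\<^sup>2)"
    using integrable_centred_sum_square[OF assms(1,2)] by (simp add: S_def m_def)
  have mean_eq: "(\<Sum>i<N. h (\<Lambda> i \<omega>)) / real N - m = S \<omega> / real N" for \<omega>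
    using assms(3) by (simp add: S_def sum_subtractf field_simps)
  have "prob {\<omega>\<in>space M. \<delta> \<le> \<bar>S \<omega> / real N\<bar>} \<le> expectation (\<lambda>\<omega>. (S \<omega> / real N)\<^sup>2) / \<delta>\<^sup>2"
    using S_square_int assms(4) by (intro second_moment_method) (auto simp: S_def power_divide)
  also have "\<dots> = expectation (\<lambda>\<omega>. (S \<omega>)\<^sup>2) / (real N)\<^sup>2 / \<delta>\<^sup>2"
    by (simp add: power_divide)
  also have "\<dots> \<le> real N * expectation (\<lambda>\<omega>. (h (\<Lambda> 0 \<omega>))\<^sup>2) / (real N)\<^sup>2 / \<delta>\<^sup>2"
    using integral_centred_sum_square_le[OF assms(1,2), of N]
    by (intro divide_right_mono) (auto simp: S_def m_def)
  also have "\<dots> = expectation (\<lambda>\<omega>. (h (\<Lambda> 0 \<omega>))\<^sup>2) / (real N * \<delta>\<^sup>2)"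
    using assms(3) by (simp add: power2_eq_square)
  finally show ?thesis
    unfolding m_def [symmetric] mean_eq .
qed

end

section \<open>Capacities with a power-law tail\<close>

locale iid_power_tail = iid_sequence +
  fixes c t :: real
  assumes t_gt_2: "2 < t"
    and pos: "\<And>i \<omega>. \<omega> \<in> space M \<Longrightarrow> 0 < \<Lambda> i \<omega>"
    and tail: "\<And>x. 0 < x \<Longrightarrow> 1 - prob {\<omega>\<in>space M. \<Lambda> 0 \<omega> \<le> x} \<le> c * x powr (- t)"
begin

lemma prob_\<Lambda>_greater_le:
  assumes "0 < x"
  shows "prob {\<omega>\<in>space M. x < \<Lambda> i \<omega>} \<le> c * x powr (- t)"
proof -
  have "prob {\<omega>\<in>space M. x < \<Lambda> i \<omega>} = prob {\<omega>\<in>space M. x < \<Lambda> 0 \<omega>}"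
    using prob_comp_\<Lambda>[of "{x<..}" i] by simp
  also have "{\<omega>\<in>space M. x < \<Lambda> 0 \<omega>} = space M - {\<omega>\<in>space M. \<Lambda> 0 \<omega> \<le> x}"
    by auto
  also have "prob \<dots> = 1 - prob {\<omega>\<in>space M. \<Lambda> 0 \<omega> \<le> x}"
    by (rule prob_compl) measurable
  finally show ?thesis
    using tail[OF assms] by simp
qed

lemma integrable_\<Lambda>_powr:
  assumes "0 \<le> p" "p < t"
  shows "integrable M (\<lambda>\<omega>. \<Lambda> 0 \<omega> powr p)"
  using assms pos prob_\<Lambda>_greater_le
  by (intro integrable_powr_of_tail_bound[where c = c and t = t]) (auto intro: less_imp_le)

lemma integrable_\<Lambda>_power2: "integrable M (\<lambda>\<omega>. (\<Lambda> 0 \<omega>)\<^sup>2)"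
  using integrable_\<Lambda>_powr[of 2] t_gt_2 pos[THEN less_imp_le]
  by (subst Bochner_Integration.integrable_cong[OF refl, where g = "\<lambda>\<omega>. \<Lambda> 0 \<omega> powr 2"]) auto

lemma integrable_\<Lambda>: "integrable M (\<lambda>\<omega>. \<Lambda> 0 \<omega>)"
  using square_integrable_imp_integrable[OF _ integrable_\<Lambda>_power2] by simp

definition mean :: "(real \<Rightarrow> real) \<Rightarrow> real" where
  "mean h = expectation (\<lambda>\<omega>. h (\<Lambda> 0 \<omega>))"

lemma mean_mono:
  fixes h g :: "real \<Rightarrow> real"
  assumes "integrable M (\<lambda>\<omega>. h (\<Lambda> 0 \<omega>))" "integrable M (\<lambda>\<omega>. g (\<Lambda> 0 \<omega>))"
    and "\<And>x. 0 < x \<Longrightarrow> h x \<le> g x"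
  shows "mean h \<le> mean g"
  unfolding mean_def using assms pos by (intro integral_mono) auto

lemma mean_nonneg: "(\<And>x. 0 < x \<Longrightarrow> 0 \<le> h x) \<Longrightarrow> 0 \<le> mean h"
  unfolding mean_def using pos by (intro integral_nonneg_AE) auto

lemma integrable_dominated:
  fixes h g :: "real \<Rightarrow> real"
  assumes [measurable]: "h \<in> borel_measurable borel"
    and "integrable M (\<lambda>\<omega>. g (\<Lambda> 0 \<omega>))" "\<And>x. 0 < x \<Longrightarrow> \<bar>h x\<bar> \<le> g x"
  shows "integrable M (\<lambda>\<omega>. h (\<Lambda> 0 \<omega>))"
proof (rule Bochner_Integration.integrable_bound[OF assms(2)])
  show "AE \<omega> in M. norm (h (\<Lambda> 0 \<omega>)) \<le> norm (g (\<Lambda> 0 \<omega>))"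
    using assms(3) pos by (auto intro!: AE_I2 order_trans[OF _ abs_ge_self])
qed measurable

lemma mean_\<Lambda>_pos: "0 < mean (\<lambda>x. x)"
proof -
  have "mean (\<lambda>x. x) \<noteq> 0"
  proof
    assume "mean (\<lambda>x. x) = 0"
    then have "AE \<omega> in M. \<Lambda> 0 \<omega> = 0"
      using integrable_\<Lambda> pos by (subst (asm) mean_def, subst (asm) integral_nonneg_eq_0_iff_AE)
        (auto intro: less_imp_le)
    moreover have "AE \<omega> in M. 0 < \<Lambda> 0 \<omega>"
      using pos by simp
    ultimately have "AE \<omega> in M. False"
      by eventually_elim simp
    then show False
      by (simp add: AE_False)
  qed
  then show ?thesis
    using mean_nonneg[of "\<lambda>x. x"] by simp
qed

lemma sum_mean:
  assumes "\<And>n. n \<in> F \<Longrightarrow> integrable M (\<lambda>\<omega>. h n (\<Lambda> 0 \<omega>))"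
  shows "(\<Sum>n\<in>F. mean (h n)) = mean (\<lambda>x. \<Sum>n\<in>F. h n x)"
  unfolding mean_def using assms by (simp add: Bochner_Integration.integral_sum)

lemma mean_divide: "mean (\<lambda>x. h x / a) = mean h / a"
  by (simp add: mean_def)

lemma integrable_poisson_weight: "integrable M (\<lambda>\<omega>. poisson_weight n (\<Lambda> 0 \<omega>))"
proof (rule integrable_dominated[where g = "\<lambda>_. 1"])
  show "\<bar>poisson_weight n x\<bar> \<le> 1" if "0 < x" for x
    using that poisson_weight_nonneg[of x n] poisson_weight_le_1[of x n] by simp
qed simp_all

lemma integrable_mult_poisson_weight: "integrable M (\<lambda>\<omega>. \<Lambda> 0 \<omega> * poisson_weight n (\<Lambda> 0 \<omega>))"
proof (rule integrable_dominated[where g = "\<lambda>x. x", OF _ integrable_\<Lambda>])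
  show "\<bar>x * poisson_weight n x\<bar> \<le> x" if "0 < x" for x
    using that poisson_weight_nonneg[of x n] mult_left_mono[OF poisson_weight_le_1, of x x n]
    by (simp add: abs_mult)
qed measurable

lemma
  assumes "finite F" "0 < m" "\<And>n. n \<in> F \<Longrightarrow> m \<le> n"
  shows sum_mean_poisson_tail_le: "(\<Sum>n\<in>F. mean (poisson_weight n)) \<le> mean (\<lambda>x. x) / real m"
    and sum_mean_mult_poisson_tail_le:
      "(\<Sum>n\<in>F. mean (\<lambda>x. x * poisson_weight n x)) \<le> mean (\<lambda>x. x\<^sup>2) / real m"
proof -
  have "mean (\<lambda>x. \<Sum>n\<in>F. poisson_weight n x) \<le> mean (\<lambda>x. x / real m)"
    using assms integrable_\<Lambda>
    by (intro mean_mono sum_poisson_weight_tail_le Bochner_Integration.integrable_sum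
        integrable_poisson_weight) auto
  then show "(\<Sum>n\<in>F. mean (poisson_weight n)) \<le> mean (\<lambda>x. x) / real m"
    using mean_divide[of "\<lambda>x. x" "real m"] by (simp add: sum_mean[OF integrable_poisson_weight])
  have "mean (\<lambda>x. \<Sum>n\<in>F. x * poisson_weight n x) \<le> mean (\<lambda>x. x\<^sup>2 / real m)"
    using assms integrable_\<Lambda>_power2
    by (intro mean_mono mult_sum_poisson_weight_tail_le Bochner_Integration.integrable_sum
        integrable_mult_poisson_weight) auto
  then show "(\<Sum>n\<in>F. mean (\<lambda>x. x * poisson_weight n x)) \<le> mean (\<lambda>x. x\<^sup>2) / real m"
    using mean_divide[of "\<lambda>x. x\<^sup>2" "real m"] by (simp add: sum_mean[OF integrable_mult_poisson_weight])
qed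

lemma sum_mean_mult_poisson_le:
  assumes "finite F"
  shows "(\<Sum>n\<in>F. mean (\<lambda>x. x * poisson_weight n x)) \<le> mean (\<lambda>x. x)"
proof -
  have "mean (\<lambda>x. \<Sum>n\<in>F. x * poisson_weight n x) \<le> mean (\<lambda>x. x)"
  proof (rule mean_mono[OF _ integrable_\<Lambda>])
    show "integrable M (\<lambda>\<omega>. \<Sum>n\<in>F. \<Lambda> 0 \<omega> * poisson_weight n (\<Lambda> 0 \<omega>))"
      by (intro Bochner_Integration.integrable_sum integrable_mult_poisson_weight)
    show "(\<Sum>n\<in>F. x * poisson_weight n x) \<le> x" if "0 < x" for x
      using that assms mult_left_mono[OF sum_poisson_weight_le_1, of x F x]
      by (simp add: sum_distrib_left)
  qed
  then show ?thesis
    by (simp only: sum_mean[OF integrable_mult_poisson_weight])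
qed

text \<open>The exponents satisfy \<open>2 < \<sigma> < \<rho> < t\<close> and \<open>\<rho> \<le> 4\<close>: moments of order \<open>\<rho>\<close> are finite,
  no capacity exceeds the truncation level \<open>N powr (1 / \<sigma>)\<close> with high probability, and every
  error term below decays at least like \<open>N powr (- \<kappa>)\<close>.\<close>

definition gap :: real where "gap = min 1 ((t - 2) / 3)"
definition \<sigma> :: real where "\<sigma> = 2 + gap"
definition \<rho> :: real where "\<rho> = 2 + 2 * gap"
definition \<kappa> :: real where "\<kappa> = min (1 / 8) (gap / \<sigma>)"

lemma exponents:
  "0 < gap" "gap \<le> 1" "2 < \<sigma>" "\<sigma> < \<rho>" "\<rho> < t" "\<rho> \<le> 4" "0 < \<kappa>" "\<kappa> \<le> 1 / 8" "\<kappa> \<le> gap / \<sigma>"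
proof -
  show gap: "0 < gap" "gap \<le> 1"
    using t_gt_2 by (auto simp: gap_def)
  have "gap \<le> (t - 2) / 3"
    unfolding gap_def by (rule min.cobounded2)
  then show "\<rho> < t"
    using gap by (simp add: \<rho>_def)
  show "2 < \<sigma>" "\<sigma> < \<rho>" "\<rho> \<le> 4"
    using gap by (auto simp: \<sigma>_def \<rho>_def)
  then show "0 < \<kappa>"
    using gap by (simp add: \<kappa>_def)
  show "\<kappa> \<le> 1 / 8" "\<kappa> \<le> gap / \<sigma>"
    unfolding \<kappa>_def by (rule min.cobounded1, rule min.cobounded2)
qed

definition level :: "nat \<Rightarrow> real" where "level N = real N powr (1 / \<sigma>)"
definition cutoff :: "nat \<Rightarrow> nat" where "cutoff N = nat \<lfloor>real N powr (1 / 8)\<rfloor>"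
definition tol :: "nat \<Rightarrow> real" where "tol N = real N powr (- \<kappa>)"
definition poisson_tol :: "nat \<Rightarrow> real" where "poisson_tol N = real N powr (- 1 / 4)"

lemma level_powr: "level N powr a = real N powr (a / \<sigma>)"
  by (simp add: level_def powr_powr)

lemma tol_pos: "0 < N \<Longrightarrow> 0 < tol N"
  by (simp add: tol_def)

lemma powr_le_tol:
  assumes "0 < N" "\<kappa> \<le> e"
  shows "real N powr (- e) \<le> tol N"
  unfolding tol_def using assms by (intro powr_mono) auto

lemma tol_le_1: "tol N \<le> 1"
proof (cases "N = 0")
  case False
  then show ?thesis
    unfolding tol_def using exponents powr_mono[of "- \<kappa>" 0 "real N"] by simp
qed (simp add: tol_def)

lemma level_powr_le_tol:
  assumes "0 < N"
  shows "level N powr (2 - \<rho>) \<le> tol N"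
proof -
  have "level N powr (2 - \<rho>) = real N powr (- (2 * gap / \<sigma>))"
    by (simp add: level_def powr_powr \<rho>_def)
  also have "\<dots> \<le> tol N"
    using assms exponents by (intro powr_le_tol) (auto simp: field_simps)
  finally show ?thesis .
qed

lemma cutoff_bounds:
  assumes "0 < N"
  shows "real N powr (1 / 8) < real (cutoff N) + 1" "real (cutoff N) + 1 \<le> 2 * real N powr (1 / 8)"
proof -
  define x where "x = real N powr (1 / 8)"
  have "1 \<le> x"
    using assms by (simp add: x_def ge_one_powr_ge_zero)
  then have "real (cutoff N) = of_int \<lfloor>x\<rfloor>"
    by (simp add: cutoff_def x_def)
  moreover have "of_int \<lfloor>x\<rfloor> \<le> x" "x < of_int \<lfloor>x\<rfloor> + 1"
    by linarith+
  ultimately show "real N powr (1 / 8) < real (cutoff N) + 1" "real (cutoff N) + 1 \<le> 2 * real N powr (1 / 8)"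
    using \<open>1 \<le> x\<close> unfolding x_def by linarith+
qed

lemma cutoff_tol:
  assumes "0 < N"
  shows "1 / (real (cutoff N) + 1) \<le> tol N" "(real (cutoff N) + 1) * poisson_tol N \<le> 2 * tol N"
proof -
  have "1 / (real (cutoff N) + 1) \<le> 1 / real N powr (1 / 8)"
    using cutoff_bounds(1)[OF assms] assms by (intro divide_left_mono) auto
  also have "\<dots> \<le> tol N"
    using assms exponents by (simp add: powr_minus_divide [symmetric] powr_le_tol)
  finally show "1 / (real (cutoff N) + 1) \<le> tol N" .
  have "(real (cutoff N) + 1) * poisson_tol N \<le> 2 * real N powr (1 / 8) * real N powr (- 1 / 4)"
    unfolding poisson_tol_def by (intro mult_right_mono cutoff_bounds(2)[OF assms]) auto
  also have "\<dots> = 2 * real N powr (- (1 / 8))"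
    by (simp add: powr_add [symmetric])
  also have "\<dots> \<le> 2 * tol N"
    using assms exponents by (simp add: powr_le_tol)
  finally show "(real (cutoff N) + 1) * poisson_tol N \<le> 2 * tol N" .
qed

definition trunc :: "nat \<Rightarrow> real \<Rightarrow> real \<Rightarrow> real" where
  "trunc N p x = (if x \<le> level N then x powr p else 0)"

lemma borel_measurable_trunc [measurable]: "trunc N p \<in> borel_measurable borel"
  unfolding trunc_def by measurable

lemma integrable_trunc:
  assumes "0 \<le> p" "p < t"
  shows "integrable M (\<lambda>\<omega>. trunc N p (\<Lambda> 0 \<omega>))"
  by (rule integrable_dominated[OF _ integrable_\<Lambda>_powr[OF assms]]) (auto simp: trunc_def)

lemma mean_trunc_le: "mean (trunc N \<sigma>) \<le> mean (\<lambda>x. x powr \<sigma>)"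
  using exponents integrable_\<Lambda>_powr[of \<sigma>]
  by (intro mean_mono integrable_trunc) (auto simp: trunc_def)

lemma mean_trunc_square_close:
  assumes "0 < N"
  shows "\<bar>mean (trunc N 2) - mean (\<lambda>x. x\<^sup>2)\<bar> \<le> mean (\<lambda>x. x powr \<rho>) * level N powr (2 - \<rho>)"
proof -
  have trunc_int: "integrable M (\<lambda>\<omega>. trunc N 2 (\<Lambda> 0 \<omega>))"
    using exponents by (intro integrable_trunc) auto
  have bound_int: "integrable M (\<lambda>\<omega>. level N powr (2 - \<rho>) * \<Lambda> 0 \<omega> powr \<rho>)"
    using integrable_\<Lambda>_powr[of \<rho>] exponents by auto
  have trunc_le: "trunc N 2 x \<le> x\<^sup>2" if "0 < x" for x
    using that by (simp add: trunc_def)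
  have gap_le: "x\<^sup>2 - trunc N 2 x \<le> level N powr (2 - \<rho>) * x powr \<rho>" if x: "0 < x" for x
  proof (cases "x \<le> level N")
    case False
    have "x\<^sup>2 = x powr \<rho> * x powr (2 - \<rho>)"
      using x by (simp add: powr_add [symmetric])
    also have "\<dots> \<le> x powr \<rho> * level N powr (2 - \<rho>)"
      using False x assms exponents by (intro mult_left_mono powr_mono2') (auto simp: level_def)
    finally show ?thesis
      using False by (simp add: trunc_def mult.commute)
  qed (use x in \<open>simp add: trunc_def\<close>)
  have "mean (trunc N 2) \<le> mean (\<lambda>x. x\<^sup>2)"
    using trunc_le by (intro mean_mono[OF trunc_int integrable_\<Lambda>_power2])
  moreover have "mean (\<lambda>x. x\<^sup>2) - mean (trunc N 2) = mean (\<lambda>x. x\<^sup>2 - trunc N 2 x)"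
    unfolding mean_def using integrable_\<Lambda>_power2 trunc_int by simp
  moreover have "mean (\<lambda>x. x\<^sup>2 - trunc N 2 x) \<le> mean (\<lambda>x. level N powr (2 - \<rho>) * x powr \<rho>)"
    using gap_le integrable_\<Lambda>_power2 trunc_int bound_int by (intro mean_mono) auto
  moreover have "mean (\<lambda>x. level N powr (2 - \<rho>) * x powr \<rho>) = mean (\<lambda>x. x powr \<rho>) * level N powr (2 - \<rho>)"
    by (simp add: mean_def)
  ultimately show ?thesis
    by linarith
qed

definition emp_mean :: "nat \<Rightarrow> (real \<Rightarrow> real) \<Rightarrow> 'a \<Rightarrow> real" where
  "emp_mean N h \<omega> = (\<Sum>i<N. h (\<Lambda> i \<omega>)) / real N"

lemma emp_mean_mono:
  assumes "\<omega> \<in> space M" "\<And>x. 0 < x \<Longrightarrow> h x \<le> g x"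
  shows "emp_mean N h \<omega> \<le> emp_mean N g \<omega>"
  unfolding emp_mean_def using assms pos by (intro divide_right_mono sum_mono) auto

lemma sum_emp_mean: "(\<Sum>n\<in>F. emp_mean N (h n) \<omega>) = emp_mean N (\<lambda>x. \<Sum>n\<in>F. h n x) \<omega>"
  unfolding emp_mean_def by (simp add: sum_divide_distrib [symmetric] sum.swap[of _ F])

lemma emp_mean_divide: "emp_mean N (\<lambda>x. h x / a) \<omega> = emp_mean N h \<omega> / a"
  unfolding emp_mean_def by (simp add: sum_divide_distrib [symmetric] mult.commute)

lemma emp_mean_nonneg: "\<omega> \<in> space M \<Longrightarrow> (\<And>x. 0 < x \<Longrightarrow> 0 \<le> h x) \<Longrightarrow> 0 \<le> emp_mean N h \<omega>"
  unfolding emp_mean_def using pos by (intro divide_nonneg_nonneg sum_nonneg) auto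

lemma cap_eq_emp_mean:
  assumes "0 < N"
  shows "cap_mu (\<lambda>i. \<Lambda> i \<omega>) N = emp_mean N (\<lambda>x. x) \<omega>"
    "cap_nu (\<lambda>i. \<Lambda> i \<omega>) N = emp_mean N (\<lambda>x. x\<^sup>2) \<omega> / emp_mean N (\<lambda>x. x) \<omega>"
    "cap_f (\<lambda>i. \<Lambda> i \<omega>) N = (\<lambda>n. emp_mean N (poisson_weight n) \<omega>)"
    "cap_g (\<lambda>i. \<Lambda> i \<omega>) N = (\<lambda>n. emp_mean N (\<lambda>x. x * poisson_weight n x) \<omega> / emp_mean N (\<lambda>x. x) \<omega>)"
  using assms
  by (auto simp: cap_mu_def cap_nu_def cap_f_def cap_g_def emp_mean_def poisson_weight_def
      sum_divide_distrib [symmetric] field_simps)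

lemma
  assumes "\<omega> \<in> space M" "finite F" "0 < m" "\<And>n. n \<in> F \<Longrightarrow> m \<le> n"
  shows sum_emp_mean_poisson_tail_le: "(\<Sum>n\<in>F. emp_mean N (poisson_weight n) \<omega>) \<le> emp_mean N (\<lambda>x. x) \<omega> / real m"
    and sum_emp_mean_mult_poisson_tail_le:
      "(\<Sum>n\<in>F. emp_mean N (\<lambda>x. x * poisson_weight n x) \<omega>) \<le> emp_mean N (\<lambda>x. x\<^sup>2) \<omega> / real m"
proof -
  have "(\<Sum>n\<in>F. emp_mean N (poisson_weight n) \<omega>) \<le> emp_mean N (\<lambda>x. x / real m) \<omega>"
    unfolding sum_emp_mean using assms by (intro emp_mean_mono sum_poisson_weight_tail_le) auto
  then show "(\<Sum>n\<in>F. emp_mean N (poisson_weight n) \<omega>) \<le> emp_mean N (\<lambda>x. x) \<omega> / real m"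
    using emp_mean_divide[of N "\<lambda>x. x" "real m" \<omega>] by simp
  have "(\<Sum>n\<in>F. emp_mean N (\<lambda>x. x * poisson_weight n x) \<omega>) \<le> emp_mean N (\<lambda>x. x\<^sup>2 / real m) \<omega>"
    unfolding sum_emp_mean using assms by (intro emp_mean_mono mult_sum_poisson_weight_tail_le) auto
  then show "(\<Sum>n\<in>F. emp_mean N (\<lambda>x. x * poisson_weight n x) \<omega>) \<le> emp_mean N (\<lambda>x. x\<^sup>2) \<omega> / real m"
    using emp_mean_divide[of N "\<lambda>x. x\<^sup>2" "real m" \<omega>] by simp
qed

subsection \<open>The good event\<close>

definition deviates :: "nat \<Rightarrow> (real \<Rightarrow> real) \<Rightarrow> real \<Rightarrow> 'a set" where
  "deviates N h e = {\<omega>\<in>space M. e \<le> \<bar>emp_mean N h \<omega> - mean h\<bar>}"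

definition exceeds_level :: "nat \<Rightarrow> 'a set" where
  "exceeds_level N = {\<omega>\<in>space M. \<exists>i<N. level N < \<Lambda> i \<omega>}"

definition poisson_deviates :: "nat \<Rightarrow> 'a set" where
  "poisson_deviates N = (\<Union>n\<le>cutoff N. deviates N (poisson_weight n) (poisson_tol N)
     \<union> deviates N (\<lambda>x. x * poisson_weight n x) (poisson_tol N))"

definition good :: "nat \<Rightarrow> 'a set" where
  "good N = space M - (exceeds_level N \<union> deviates N (\<lambda>x. x) (tol N) \<union> deviates N (trunc N 2) (tol N)
     \<union> deviates N (trunc N \<sigma>) 1 \<union> poisson_deviates N)"

lemma sets_deviates [measurable]:
  assumes [measurable]: "h \<in> borel_measurable borel"
  shows "deviates N h e \<in> sets M"
  unfolding deviates_def emp_mean_def by measurable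

lemma sets_exceeds_level [measurable]: "exceeds_level N \<in> sets M"
  unfolding exceeds_level_def by measurable

lemma sets_poisson_deviates [measurable]: "poisson_deviates N \<in> sets M"
  unfolding poisson_deviates_def by measurable

lemma sets_good: "good N \<in> sets M"
  unfolding good_def by measurable

lemma mem_goodD:
  assumes "\<omega> \<in> good N"
  shows "\<omega> \<in> space M" "\<And>i. i < N \<Longrightarrow> \<Lambda> i \<omega> \<le> level N"
    "\<bar>emp_mean N (\<lambda>x. x) \<omega> - mean (\<lambda>x. x)\<bar> < tol N"
    "\<bar>emp_mean N (trunc N 2) \<omega> - mean (trunc N 2)\<bar> < tol N"
    "\<bar>emp_mean N (trunc N \<sigma>) \<omega> - mean (trunc N \<sigma>)\<bar> < 1"
    "\<And>n. n \<le> cutoff N \<Longrightarrow> \<bar>emp_mean N (poisson_weight n) \<omega> - mean (poisson_weight n)\<bar> < poisson_tol N"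
    "\<And>n. n \<le> cutoff N \<Longrightarrow>
       \<bar>emp_mean N (\<lambda>x. x * poisson_weight n x) \<omega> - mean (\<lambda>x. x * poisson_weight n x)\<bar> < poisson_tol N"
  using assms by (auto simp: good_def deviates_def exceeds_level_def poisson_deviates_def not_le)

lemma prob_exceeds_level_le:
  assumes "0 < N"
  shows "prob (exceeds_level N) \<le> c * real N powr (1 - t / \<sigma>)"
proof -
  have "exceeds_level N = (\<Union>i<N. {\<omega>\<in>space M. level N < \<Lambda> i \<omega>})"
    by (auto simp: exceeds_level_def)
  then have "prob (exceeds_level N) \<le> (\<Sum>i<N. prob {\<omega>\<in>space M. level N < \<Lambda> i \<omega>})"
    by (simp add: measure_UNION_le)
  also have "\<dots> \<le> (\<Sum>i<N. c * level N powr (- t))"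
    using assms by (intro sum_mono prob_\<Lambda>_greater_le) (simp add: level_def)
  also have "\<dots> = c * real N powr (1 - t / \<sigma>)"
    using assms by (simp add: level_def powr_powr powr_diff powr_minus_divide)
  finally show ?thesis .
qed

lemma prob_deviates_le:
  fixes h g :: "real \<Rightarrow> real"
  assumes [measurable]: "h \<in> borel_measurable borel" "g \<in> borel_measurable borel"
    and g_int: "integrable M (\<lambda>\<omega>. g (\<Lambda> 0 \<omega>))" and dom: "\<And>x. 0 < x \<Longrightarrow> (h x)\<^sup>2 \<le> g x"
    and "0 < N" "0 < e"
  shows "prob (deviates N h e) \<le> mean g / (real N * e\<^sup>2)"
proof -
  have square_int: "integrable M (\<lambda>\<omega>. (h (\<Lambda> 0 \<omega>))\<^sup>2)"
    using dom by (intro integrable_dominated[OF _ g_int]) auto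
  have "mean (\<lambda>x. (h x)\<^sup>2) \<le> mean g"
    using dom by (intro mean_mono[OF square_int g_int])
  then have "mean (\<lambda>x. (h x)\<^sup>2) / (real N * e\<^sup>2) \<le> mean g / (real N * e\<^sup>2)"
    using assms(5,6) by (intro divide_right_mono) auto
  moreover have "prob (deviates N h e) \<le> mean (\<lambda>x. (h x)\<^sup>2) / (real N * e\<^sup>2)"
    unfolding deviates_def emp_mean_def mean_def
    using prob_empirical_mean_deviation_le[OF assms(1) square_int assms(5,6)] .
  ultimately show ?thesis
    by linarith
qed

text \<open>Below the level \<open>L\<close> we have \<open>x powr (2 * p) \<le> L powr (2 * p - \<rho>) * x powr \<rho>\<close>, so
  truncation turns the missing moment of order \<open>2 * p\<close> into a power of the level.\<close>

lemma prob_deviates_trunc_le: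
  assumes "\<rho> \<le> 2 * p" "0 < N" "0 < e"
  shows "prob (deviates N (trunc N p) e)
    \<le> mean (\<lambda>x. x powr \<rho>) * level N powr (2 * p - \<rho>) / (real N * e\<^sup>2)"
proof -
  define g where "g x = level N powr (2 * p - \<rho>) * x powr \<rho>" for x
  have [measurable]: "g \<in> borel_measurable borel"
    unfolding g_def by measurable
  have dom: "(trunc N p x)\<^sup>2 \<le> g x" if "0 < x" for x
  proof (cases "x \<le> level N")
    case True
    have "(trunc N p x)\<^sup>2 = x powr \<rho> * x powr (2 * p - \<rho>)"
      using True that by (simp add: trunc_def powr_power powr_add [symmetric] mult.commute)
    also have "\<dots> \<le> x powr \<rho> * level N powr (2 * p - \<rho>)"
      using True that assms(1) by (intro mult_left_mono powr_mono2) auto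
    finally show ?thesis
      by (simp add: g_def mult.commute)
  qed (simp add: trunc_def g_def)
  have "integrable M (\<lambda>\<omega>. g (\<Lambda> 0 \<omega>))"
    unfolding g_def using integrable_\<Lambda>_powr[of \<rho>] exponents by auto
  then have "prob (deviates N (trunc N p) e) \<le> mean g / (real N * e\<^sup>2)"
    using dom assms(2,3) by (intro prob_deviates_le) auto
  also have "mean g = mean (\<lambda>x. x powr \<rho>) * level N powr (2 * p - \<rho>)"
    by (simp add: g_def mean_def mult.commute)
  finally show ?thesis .
qed

lemma prob_deviates_poisson_tol_le:
  fixes h :: "real \<Rightarrow> real"
  assumes [measurable]: "h \<in> borel_measurable borel"
    and dom: "\<And>x. 0 < x \<Longrightarrow> (h x)\<^sup>2 \<le> 1 + x\<^sup>2" and "0 < N"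
  shows "prob (deviates N h (poisson_tol N)) \<le> (1 + mean (\<lambda>x. x\<^sup>2)) * real N powr (- 1 / 2)"
proof -
  have "prob (deviates N h (poisson_tol N)) \<le> mean (\<lambda>x. 1 + x\<^sup>2) / (real N * (poisson_tol N)\<^sup>2)"
    using integrable_\<Lambda>_power2 dom assms(3) by (intro prob_deviates_le) (auto simp: poisson_tol_def)
  also have "mean (\<lambda>x. 1 + x\<^sup>2) = 1 + mean (\<lambda>x. x\<^sup>2)"
    unfolding mean_def using integrable_\<Lambda>_power2 by (simp add: prob_space)
  also have "(1 + mean (\<lambda>x. x\<^sup>2)) / (real N * (poisson_tol N)\<^sup>2) = (1 + mean (\<lambda>x. x\<^sup>2)) * real N powr (- 1 / 2)"
    using assms(3) powr_divide_mult_square[of "real N" "- 1 / 2" 0 "- 1 / 4" "1 + mean (\<lambda>x. x\<^sup>2)"]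
    by (simp add: poisson_tol_def)
  finally show ?thesis .
qed

lemma prob_poisson_deviates_le:
  assumes "0 < N"
  shows "prob (poisson_deviates N) \<le> 4 * (1 + mean (\<lambda>x. x\<^sup>2)) * real N powr (- 3 / 8)"
proof -
  let ?b = "(1 + mean (\<lambda>x. x\<^sup>2)) * real N powr (- 1 / 2)"
  have "prob (poisson_deviates N) \<le> (\<Sum>n\<le>cutoff N. prob (deviates N (poisson_weight n) (poisson_tol N)
      \<union> deviates N (\<lambda>x. x * poisson_weight n x) (poisson_tol N)))"
    unfolding poisson_deviates_def by (intro measure_UNION_le) auto
  also have "\<dots> \<le> (\<Sum>n\<le>cutoff N. ?b + ?b)"
  proof (intro sum_mono)
    fix n
    have "prob (deviates N (poisson_weight n) (poisson_tol N)
        \<union> deviates N (\<lambda>x. x * poisson_weight n x) (poisson_tol N))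
      \<le> prob (deviates N (poisson_weight n) (poisson_tol N))
        + prob (deviates N (\<lambda>x. x * poisson_weight n x) (poisson_tol N))"
      by (intro measure_Un_le) measurable
    moreover have "prob (deviates N (poisson_weight n) (poisson_tol N)) \<le> ?b"
      "prob (deviates N (\<lambda>x. x * poisson_weight n x) (poisson_tol N)) \<le> ?b"
      using assms poisson_weight_square_le by (intro prob_deviates_poisson_tol_le; simp)+
    ultimately show "prob (deviates N (poisson_weight n) (poisson_tol N)
        \<union> deviates N (\<lambda>x. x * poisson_weight n x) (poisson_tol N)) \<le> ?b + ?b"
      by linarith
  qed
  also have "\<dots> = (real (cutoff N) + 1) * 2 * ?b"
    by (simp add: algebra_simps)
  also have "\<dots> \<le> 2 * real N powr (1 / 8) * 2 * ?b"
    using cutoff_bounds(2)[OF assms] mean_nonneg[of "\<lambda>x. x\<^sup>2"] by (intro mult_right_mono) auto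
  also have "\<dots> = 4 * (1 + mean (\<lambda>x. x\<^sup>2)) * (real N powr (1 / 8) * real N powr (- 1 / 2))"
    by (simp add: algebra_simps)
  also have "\<dots> = 4 * (1 + mean (\<lambda>x. x\<^sup>2)) * real N powr (- 3 / 8)"
    by (simp add: powr_add [symmetric])
  finally show ?thesis .
qed

lemma prob_exceeds_level_tendsto_0: "(\<lambda>N. prob (exceeds_level N)) \<longlonglongrightarrow> 0"
proof (rule tendsto_zero_of_powr_bound)
  show "1 - t / \<sigma> < 0"
    using exponents by (simp add: field_simps)
qed (use prob_exceeds_level_le in simp)

lemma prob_deviates_mean_tendsto_0: "(\<lambda>N. prob (deviates N (\<lambda>x. x) (tol N))) \<longlonglongrightarrow> 0"
proof (rule tendsto_zero_of_powr_bound)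
  fix N :: nat
  assume N: "0 < N"
  have "prob (deviates N (\<lambda>x. x) (tol N)) \<le> mean (\<lambda>x. x\<^sup>2) / (real N * (tol N)\<^sup>2)"
    using integrable_\<Lambda>_power2 N by (intro prob_deviates_le) (auto simp: tol_def)
  also have "\<dots> = mean (\<lambda>x. x\<^sup>2) * real N powr (2 * \<kappa> - 1)"
    using N powr_divide_mult_square[of "real N" "2 * \<kappa> - 1" 0 "- \<kappa>" "mean (\<lambda>x. x\<^sup>2)"]
    by (simp add: tol_def)
  finally show "\<bar>prob (deviates N (\<lambda>x. x) (tol N))\<bar> \<le> mean (\<lambda>x. x\<^sup>2) * real N powr (2 * \<kappa> - 1)"
    by simp
qed (use exponents in simp)

lemma prob_deviates_trunc_square_tendsto_0: "(\<lambda>N. prob (deviates N (trunc N 2) (tol N))) \<longlonglongrightarrow> 0"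
proof (rule tendsto_zero_of_powr_bound)
  fix N :: nat
  assume N: "0 < N"
  have "prob (deviates N (trunc N 2) (tol N))
      \<le> mean (\<lambda>x. x powr \<rho>) * level N powr (2 * 2 - \<rho>) / (real N * (tol N)\<^sup>2)"
    using exponents N by (intro prob_deviates_trunc_le) (auto simp: tol_def)
  also have "\<dots> = mean (\<lambda>x. x powr \<rho>) * real N powr ((4 - \<rho>) / \<sigma> + 2 * \<kappa> - 1)"
    using N powr_divide_mult_square[of "real N" "(4 - \<rho>) / \<sigma> + 2 * \<kappa> - 1" "(4 - \<rho>) / \<sigma>" "- \<kappa>"]
    by (simp add: level_powr tol_def)
  finally show "\<bar>prob (deviates N (trunc N 2) (tol N))\<bar>
      \<le> mean (\<lambda>x. x powr \<rho>) * real N powr ((4 - \<rho>) / \<sigma> + 2 * \<kappa> - 1)"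
    by simp
next
  have "(4 - \<rho>) / \<sigma> + 2 * \<kappa> \<le> 2 / \<sigma>"
    using exponents by (simp add: \<rho>_def field_simps)
  moreover have "2 / \<sigma> < 1"
    using exponents by simp
  ultimately show "(4 - \<rho>) / \<sigma> + 2 * \<kappa> - 1 < 0"
    by linarith
qed

lemma prob_deviates_trunc_\<sigma>_tendsto_0: "(\<lambda>N. prob (deviates N (trunc N \<sigma>) 1)) \<longlonglongrightarrow> 0"
proof (rule tendsto_zero_of_powr_bound)
  fix N :: nat
  assume N: "0 < N"
  have "prob (deviates N (trunc N \<sigma>) 1)
      \<le> mean (\<lambda>x. x powr \<rho>) * level N powr (2 * \<sigma> - \<rho>) / (real N * 1\<^sup>2)"
    using exponents N by (intro prob_deviates_trunc_le) auto
  also have "\<dots> = mean (\<lambda>x. x powr \<rho>) * real N powr ((2 * \<sigma> - \<rho>) / \<sigma> - 1)"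
    using N powr_divide_mult_square[of "real N" "(2 * \<sigma> - \<rho>) / \<sigma> - 1" "(2 * \<sigma> - \<rho>) / \<sigma>" 0]
    by (simp add: level_powr)
  finally show "\<bar>prob (deviates N (trunc N \<sigma>) 1)\<bar>
      \<le> mean (\<lambda>x. x powr \<rho>) * real N powr ((2 * \<sigma> - \<rho>) / \<sigma> - 1)"
    by simp
next
  show "(2 * \<sigma> - \<rho>) / \<sigma> - 1 < 0"
    using exponents by (simp add: divide_less_eq)
qed

lemma prob_poisson_deviates_tendsto_0: "(\<lambda>N. prob (poisson_deviates N)) \<longlonglongrightarrow> 0"
proof (rule tendsto_zero_of_powr_bound)
  show "\<bar>prob (poisson_deviates N)\<bar> \<le> 4 * (1 + mean (\<lambda>x. x\<^sup>2)) * real N powr (- 3 / 8)" if "0 < N" for N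
    using prob_poisson_deviates_le[OF that] by simp
qed simp

lemma prob_good_tendsto_1: "(\<lambda>N. prob (good N)) \<longlonglongrightarrow> 1"
proof -
  have prob_Un_le: "prob (A \<union> B) \<le> p + q"
    if "A \<in> events" "B \<in> events" "prob A \<le> p" "prob B \<le> q" for A B p q
    using measure_Un_le[OF that(1,2)] that(3,4) by linarith
  define bad where "bad N = exceeds_level N \<union> deviates N (\<lambda>x. x) (tol N) \<union> deviates N (trunc N 2) (tol N)
     \<union> deviates N (trunc N \<sigma>) 1 \<union> poisson_deviates N" for N
  have [measurable]: "bad N \<in> sets M" for N
    unfolding bad_def by measurable
  have bad_le: "prob (bad N) \<le> prob (exceeds_level N) + prob (deviates N (\<lambda>x. x) (tol N))
      + prob (deviates N (trunc N 2) (tol N)) + prob (deviates N (trunc N \<sigma>) 1) + prob (poisson_deviates N)"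
    for N
    unfolding bad_def
    by (intro prob_Un_le order_refl sets.Un sets_exceeds_level sets_poisson_deviates sets_deviates
        borel_measurable_trunc measurable_ident_sets refl)
  have "(\<lambda>N. prob (exceeds_level N) + prob (deviates N (\<lambda>x. x) (tol N))
      + prob (deviates N (trunc N 2) (tol N)) + prob (deviates N (trunc N \<sigma>) 1) + prob (poisson_deviates N))
    \<longlonglongrightarrow> 0"
    using tendsto_add[OF tendsto_add[OF tendsto_add[OF tendsto_add[OF prob_exceeds_level_tendsto_0
        prob_deviates_mean_tendsto_0] prob_deviates_trunc_square_tendsto_0] prob_deviates_trunc_\<sigma>_tendsto_0]
        prob_poisson_deviates_tendsto_0]
    by simp
  then have "(\<lambda>N. prob (bad N)) \<longlonglongrightarrow> 0"
  proof (rule Lim_null_comparison [rotated])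
    show "\<forall>\<^sub>F N in sequentially. norm (prob (bad N)) \<le> prob (exceeds_level N)
        + prob (deviates N (\<lambda>x. x) (tol N)) + prob (deviates N (trunc N 2) (tol N))
        + prob (deviates N (trunc N \<sigma>) 1) + prob (poisson_deviates N)"
      using bad_le by (intro always_eventually allI) simp
  qed
  moreover have "prob (good N) = 1 - prob (bad N)" for N
    unfolding good_def bad_def [symmetric] by (rule prob_compl) measurable
  ultimately show ?thesis
    using tendsto_diff[OF tendsto_const[of 1], of "\<lambda>N. prob (bad N)" 0] by simp
qed

subsection \<open>Conditions (C1)--(C3) on the good event\<close>

lemma sum_tail_mean_poisson_le:
  assumes "0 < N"
  shows "(\<Sum>n\<in>{cutoff N<..<K}. mean (poisson_weight n)) \<le> mean (\<lambda>x. x) * tol N"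
    and "(\<Sum>n\<in>{cutoff N<..<K}. mean (\<lambda>x. x * poisson_weight n x)) \<le> mean (\<lambda>x. x\<^sup>2) * tol N"
proof -
  have "(\<Sum>n\<in>{cutoff N<..<K}. mean (poisson_weight n)) \<le> mean (\<lambda>x. x) * (1 / (real (cutoff N) + 1))"
    using sum_mean_poisson_tail_le[of "{cutoff N<..<K}" "Suc (cutoff N)"] by (simp add: add.commute)
  also have "\<dots> \<le> mean (\<lambda>x. x) * tol N"
    using cutoff_tol(1)[OF assms] mean_\<Lambda>_pos by (intro mult_left_mono) auto
  finally show "(\<Sum>n\<in>{cutoff N<..<K}. mean (poisson_weight n)) \<le> mean (\<lambda>x. x) * tol N" .
  have "(\<Sum>n\<in>{cutoff N<..<K}. mean (\<lambda>x. x * poisson_weight n x))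
      \<le> mean (\<lambda>x. x\<^sup>2) * (1 / (real (cutoff N) + 1))"
    using sum_mean_mult_poisson_tail_le[of "{cutoff N<..<K}" "Suc (cutoff N)"] by (simp add: add.commute)
  also have "\<dots> \<le> mean (\<lambda>x. x\<^sup>2) * tol N"
    using cutoff_tol(1)[OF assms] mean_nonneg[of "\<lambda>x. x\<^sup>2"] by (intro mult_left_mono) auto
  finally show "(\<Sum>n\<in>{cutoff N<..<K}. mean (\<lambda>x. x * poisson_weight n x)) \<le> mean (\<lambda>x. x\<^sup>2) * tol N" .
qed

context
  fixes N :: nat and \<omega> :: 'a
  assumes N_pos: "0 < N" and good: "\<omega> \<in> good N" and tol_le: "tol N \<le> mean (\<lambda>x. x) / 2"
begin

lemma emp_mean_\<Lambda>_bounds: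
  "mean (\<lambda>x. x) / 2 \<le> emp_mean N (\<lambda>x. x) \<omega>" "emp_mean N (\<lambda>x. x) \<omega> \<le> 2 * mean (\<lambda>x. x)"
  using mem_goodD(3)[OF good] tol_le by linarith+

lemma emp_mean_square_eq_trunc: "emp_mean N (\<lambda>x. x\<^sup>2) \<omega> = emp_mean N (trunc N 2) \<omega>"
  unfolding emp_mean_def using mem_goodD(1,2)[OF good] pos[THEN less_imp_le]
  by (intro arg_cong2[where f = "(/)"] sum.cong) (auto simp: trunc_def)

lemma emp_mean_square_close: "\<bar>emp_mean N (\<lambda>x. x\<^sup>2) \<omega> - mean (\<lambda>x. x\<^sup>2)\<bar> \<le> (1 + mean (\<lambda>x. x powr \<rho>)) * tol N"
proof -
  have "mean (\<lambda>x. x powr \<rho>) * level N powr (2 - \<rho>) \<le> mean (\<lambda>x. x powr \<rho>) * tol N"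
    using level_powr_le_tol[OF N_pos] mean_nonneg[of "\<lambda>x. x powr \<rho>"] by (intro mult_left_mono) auto
  then show ?thesis
    using mem_goodD(4)[OF good] mean_trunc_square_close[OF N_pos] emp_mean_square_eq_trunc
    by (simp add: algebra_simps)
qed

lemma cap_nu_close:
  "\<bar>cap_nu (\<lambda>i. \<Lambda> i \<omega>) N - mean (\<lambda>x. x\<^sup>2) / mean (\<lambda>x. x)\<bar>
    \<le> (2 * (1 + mean (\<lambda>x. x powr \<rho>)) / mean (\<lambda>x. x) + 2 * mean (\<lambda>x. x\<^sup>2) / (mean (\<lambda>x. x))\<^sup>2) * tol N"
proof -
  have "\<bar>cap_nu (\<lambda>i. \<Lambda> i \<omega>) N - mean (\<lambda>x. x\<^sup>2) / mean (\<lambda>x. x)\<bar>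
      \<le> 2 / mean (\<lambda>x. x) * \<bar>emp_mean N (\<lambda>x. x\<^sup>2) \<omega> - mean (\<lambda>x. x\<^sup>2)\<bar>
        + 2 / (mean (\<lambda>x. x))\<^sup>2 * mean (\<lambda>x. x\<^sup>2) * tol N"
    unfolding cap_eq_emp_mean(2)[OF N_pos]
    using mean_\<Lambda>_pos emp_mean_\<Lambda>_bounds mem_goodD(3)[OF good] mean_nonneg[of "\<lambda>x. x\<^sup>2"]
    by (intro abs_divide_diff_divide_le) auto
  also have "\<dots> \<le> 2 / mean (\<lambda>x. x) * ((1 + mean (\<lambda>x. x powr \<rho>)) * tol N)
        + 2 / (mean (\<lambda>x. x))\<^sup>2 * mean (\<lambda>x. x\<^sup>2) * tol N"
    using emp_mean_square_close mean_\<Lambda>_pos by (intro add_right_mono mult_left_mono) auto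
  finally show ?thesis
    by (simp add: algebra_simps add_divide_distrib)
qed

lemma cap_moment_le:
  assumes "0 \<le> p" "p \<le> \<sigma>"
  shows "(\<Sum>i<N. \<Lambda> i \<omega> powr p) / real N \<le> 2 + mean (\<lambda>x. x powr \<sigma>)"
proof -
  have "x powr p \<le> 1 + x powr \<sigma>" if "0 < x" for x
  proof (cases "x \<le> 1")
    case True
    then have "x powr p \<le> 1"
      using that assms by (intro powr_le1) auto
    then show ?thesis
      using powr_ge_zero[of x \<sigma>] by linarith
  next
    case False
    then show ?thesis
      using assms by (simp add: add_increasing powr_mono)
  qed
  then have "(\<Sum>i<N. \<Lambda> i \<omega> powr p) / real N \<le> emp_mean N (\<lambda>x. 1 + x powr \<sigma>) \<omega>"
    unfolding emp_mean_def using mem_goodD(1)[OF good] pos by (intro divide_right_mono sum_mono) auto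
  also have "\<dots> = 1 + emp_mean N (trunc N \<sigma>) \<omega>"
    unfolding emp_mean_def using N_pos mem_goodD(1,2)[OF good]
    by (simp add: sum.distrib add_divide_distrib trunc_def)
  also have "\<dots> \<le> 2 + mean (\<lambda>x. x powr \<sigma>)"
    using mem_goodD(5)[OF good] mean_trunc_le[of N] by linarith
  finally show ?thesis .
qed

lemma sum_tail_emp_mean_poisson_le:
  "(\<Sum>n\<in>{cutoff N<..<K}. emp_mean N (poisson_weight n) \<omega>) \<le> 2 * mean (\<lambda>x. x) * tol N"
  "(\<Sum>n\<in>{cutoff N<..<K}. emp_mean N (\<lambda>x. x * poisson_weight n x) \<omega>)
    \<le> (1 + mean (\<lambda>x. x\<^sup>2) + mean (\<lambda>x. x powr \<rho>)) * tol N"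
proof -
  have "(\<Sum>n\<in>{cutoff N<..<K}. emp_mean N (poisson_weight n) \<omega>)
      \<le> emp_mean N (\<lambda>x. x) \<omega> * (1 / (real (cutoff N) + 1))"
    using sum_emp_mean_poisson_tail_le[OF mem_goodD(1)[OF good], of "{cutoff N<..<K}" "Suc (cutoff N)" N]
    by (simp add: add.commute)
  also have "\<dots> \<le> 2 * mean (\<lambda>x. x) * tol N"
    using emp_mean_\<Lambda>_bounds cutoff_tol(1)[OF N_pos] mean_\<Lambda>_pos by (intro mult_mono) auto
  finally show "(\<Sum>n\<in>{cutoff N<..<K}. emp_mean N (poisson_weight n) \<omega>) \<le> 2 * mean (\<lambda>x. x) * tol N" .
  have "(1 + mean (\<lambda>x. x powr \<rho>)) * tol N \<le> (1 + mean (\<lambda>x. x powr \<rho>)) * 1"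
    using mean_nonneg[of "\<lambda>x. x powr \<rho>"] by (intro mult_left_mono tol_le_1) auto
  then have "emp_mean N (\<lambda>x. x\<^sup>2) \<omega> \<le> 1 + mean (\<lambda>x. x\<^sup>2) + mean (\<lambda>x. x powr \<rho>)"
    using emp_mean_square_close by (simp add: abs_le_iff)
  moreover have "(\<Sum>n\<in>{cutoff N<..<K}. emp_mean N (\<lambda>x. x * poisson_weight n x) \<omega>)
      \<le> emp_mean N (\<lambda>x. x\<^sup>2) \<omega> * (1 / (real (cutoff N) + 1))"
    using sum_emp_mean_mult_poisson_tail_le[OF mem_goodD(1)[OF good], of "{cutoff N<..<K}" "Suc (cutoff N)" N]
    by (simp add: add.commute)
  moreover have "emp_mean N (\<lambda>x. x\<^sup>2) \<omega> * (1 / (real (cutoff N) + 1))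
      \<le> (1 + mean (\<lambda>x. x\<^sup>2) + mean (\<lambda>x. x powr \<rho>)) * tol N"
    if "emp_mean N (\<lambda>x. x\<^sup>2) \<omega> \<le> 1 + mean (\<lambda>x. x\<^sup>2) + mean (\<lambda>x. x powr \<rho>)"
    using that cutoff_tol(1)[OF N_pos] mean_nonneg[of "\<lambda>x. x\<^sup>2"] mean_nonneg[of "\<lambda>x. x powr \<rho>"]
    by (intro mult_mono) auto
  ultimately show "(\<Sum>n\<in>{cutoff N<..<K}. emp_mean N (\<lambda>x. x * poisson_weight n x) \<omega>)
      \<le> (1 + mean (\<lambda>x. x\<^sup>2) + mean (\<lambda>x. x powr \<rho>)) * tol N"
    by linarith
qed

lemma sum_head_emp_mean_poisson_le:
  "(\<Sum>n\<le>cutoff N. \<bar>emp_mean N (poisson_weight n) \<omega> - mean (poisson_weight n)\<bar>) \<le> 2 * tol N"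
proof -
  have "(\<Sum>n\<le>cutoff N. \<bar>emp_mean N (poisson_weight n) \<omega> - mean (poisson_weight n)\<bar>)
      \<le> (\<Sum>n\<le>cutoff N. poisson_tol N)"
    using mem_goodD(6)[OF good] by (intro sum_mono) (auto intro: less_imp_le)
  also have "\<dots> \<le> 2 * tol N"
    using cutoff_tol(2)[OF N_pos] by (simp add: algebra_simps)
  finally show ?thesis .
qed

text \<open>Normalising by the empirical rather than the true mean costs a relative error
  of order \<open>tol N\<close> in each term, and the terms sum to at most \<open>mean (\<lambda>x. x)\<close>.\<close>

lemma sum_head_emp_mean_mult_poisson_le:
  "(\<Sum>n\<le>cutoff N. \<bar>emp_mean N (\<lambda>x. x * poisson_weight n x) \<omega> / emp_mean N (\<lambda>x. x) \<omega>
      - mean (\<lambda>x. x * poisson_weight n x) / mean (\<lambda>x. x)\<bar>) \<le> 6 / mean (\<lambda>x. x) * tol N"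
proof -
  define \<mu> where "\<mu> = mean (\<lambda>x. x)"
  define g where "g n = mean (\<lambda>x. x * poisson_weight n x)" for n
  have \<mu>: "0 < \<mu>" "\<mu> / 2 \<le> emp_mean N (\<lambda>x. x) \<omega>" "\<bar>emp_mean N (\<lambda>x. x) \<omega> - \<mu>\<bar> \<le> tol N"
    using mean_\<Lambda>_pos emp_mean_\<Lambda>_bounds mem_goodD(3)[OF good] by (auto simp: \<mu>_def)
  have g_nonneg: "0 \<le> g n" for n
    unfolding g_def by (intro mean_nonneg) (auto intro!: mult_nonneg_nonneg poisson_weight_nonneg)
  have "(\<Sum>n\<le>cutoff N. \<bar>emp_mean N (\<lambda>x. x * poisson_weight n x) \<omega> / emp_mean N (\<lambda>x. x) \<omega> - g n / \<mu>\<bar>)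
      \<le> (\<Sum>n\<le>cutoff N. 2 / \<mu> * poisson_tol N + 2 / \<mu>\<^sup>2 * g n * tol N)"
  proof (intro sum_mono)
    fix n assume "n \<in> {..cutoff N}"
    then have "\<bar>emp_mean N (\<lambda>x. x * poisson_weight n x) \<omega> - g n\<bar> \<le> poisson_tol N"
      using mem_goodD(7)[OF good, of n] by (simp add: g_def)
    then show "\<bar>emp_mean N (\<lambda>x. x * poisson_weight n x) \<omega> / emp_mean N (\<lambda>x. x) \<omega> - g n / \<mu>\<bar>
        \<le> 2 / \<mu> * poisson_tol N + 2 / \<mu>\<^sup>2 * g n * tol N"
      using abs_divide_diff_divide_le[OF \<mu> g_nonneg, of "emp_mean N (\<lambda>x. x * poisson_weight n x) \<omega>"] \<mu>(1)
      by (smt (verit) divide_pos_pos mult_left_mono)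
  qed
  also have "\<dots> = 2 / \<mu> * ((real (cutoff N) + 1) * poisson_tol N) + 2 / \<mu>\<^sup>2 * tol N * (\<Sum>n\<le>cutoff N. g n)"
    by (simp add: sum.distrib sum_distrib_left sum_divide_distrib mult_ac add_ac)
  also have "\<dots> \<le> 2 / \<mu> * (2 * tol N) + 2 / \<mu>\<^sup>2 * tol N * \<mu>"
    using cutoff_tol(2)[OF N_pos] sum_mean_mult_poisson_le[of "{..cutoff N}"] \<mu>(1) tol_pos[OF N_pos]
    by (intro add_mono mult_left_mono) (auto simp: g_def \<mu>_def)
  also have "\<dots> = 6 / \<mu> * tol N"
    using \<mu>(1) by (simp add: power2_eq_square field_simps)
  finally show ?thesis
    by (simp add: g_def \<mu>_def)
qed

lemma dTV_cap_f_le: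
  "dTV (cap_f (\<lambda>i. \<Lambda> i \<omega>) N) (\<lambda>n. mean (poisson_weight n)) \<le> (1 + 2 * mean (\<lambda>x. x)) * tol N"
proof -
  have "dTV (\<lambda>n. emp_mean N (poisson_weight n) \<omega>) (\<lambda>n. mean (poisson_weight n))
      \<le> (2 * tol N + 2 * mean (\<lambda>x. x) * tol N + mean (\<lambda>x. x) * tol N) / 2"
    by (rule dTV_le_head_tail[OF _ _ sum_head_emp_mean_poisson_le sum_tail_emp_mean_poisson_le(1)
          sum_tail_mean_poisson_le(1)[OF N_pos]])
      (use mem_goodD(1)[OF good] in \<open>auto intro!: emp_mean_nonneg mean_nonneg poisson_weight_nonneg\<close>)
  also have "\<dots> \<le> (1 + 2 * mean (\<lambda>x. x)) * tol N"
    using mean_\<Lambda>_pos tol_pos[OF N_pos] by (simp add: field_simps)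
  finally show ?thesis
    by (simp only: cap_eq_emp_mean(3)[OF N_pos])
qed

lemma dTV_cap_g_le:
  "dTV (cap_g (\<lambda>i. \<Lambda> i \<omega>) N) (\<lambda>n. mean (\<lambda>x. x * poisson_weight n x) / mean (\<lambda>x. x))
    \<le> (4 + 2 * mean (\<lambda>x. x\<^sup>2) + mean (\<lambda>x. x powr \<rho>)) / mean (\<lambda>x. x) * tol N"
proof -
  define \<mu> where "\<mu> = mean (\<lambda>x. x)"
  define a where "a = emp_mean N (\<lambda>x. x) \<omega>"
  have \<mu>: "0 < \<mu>" "\<mu> / 2 \<le> a"
    using mean_\<Lambda>_pos emp_mean_\<Lambda>_bounds by (auto simp: \<mu>_def a_def)
  have tail_emp_mean: "(\<Sum>n\<in>{cutoff N<..<K}. emp_mean N (\<lambda>x. x * poisson_weight n x) \<omega> / a)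
      \<le> 2 * (1 + mean (\<lambda>x. x\<^sup>2) + mean (\<lambda>x. x powr \<rho>)) / \<mu> * tol N" for K
  proof -
    have "(\<Sum>n\<in>{cutoff N<..<K}. emp_mean N (\<lambda>x. x * poisson_weight n x) \<omega>) / a
        \<le> (1 + mean (\<lambda>x. x\<^sup>2) + mean (\<lambda>x. x powr \<rho>)) * tol N / (\<mu> / 2)"
      using \<mu> sum_tail_emp_mean_poisson_le(2) mean_nonneg[of "\<lambda>x. x\<^sup>2"] mean_nonneg[of "\<lambda>x. x powr \<rho>"]
        tol_pos[OF N_pos] mem_goodD(1)[OF good]
      by (intro frac_le sum_nonneg emp_mean_nonneg) (auto intro!: mult_nonneg_nonneg poisson_weight_nonneg)
    then show ?thesis
      by (simp add: sum_divide_distrib [symmetric] field_simps)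
  qed
  have tail_mean: "(\<Sum>n\<in>{cutoff N<..<K}. mean (\<lambda>x. x * poisson_weight n x) / \<mu>)
      \<le> mean (\<lambda>x. x\<^sup>2) / \<mu> * tol N" for K
    using sum_tail_mean_poisson_le(2)[OF N_pos, of K] \<mu>(1)
    by (simp add: sum_divide_distrib [symmetric] divide_right_mono)
  have "dTV (\<lambda>n. emp_mean N (\<lambda>x. x * poisson_weight n x) \<omega> / a) (\<lambda>n. mean (\<lambda>x. x * poisson_weight n x) / \<mu>)
      \<le> (6 / \<mu> * tol N + 2 * (1 + mean (\<lambda>x. x\<^sup>2) + mean (\<lambda>x. x powr \<rho>)) / \<mu> * tol N
          + mean (\<lambda>x. x\<^sup>2) / \<mu> * tol N) / 2"
    by (rule dTV_le_head_tail[OF _ _ sum_head_emp_mean_mult_poisson_le[folded a_def \<mu>_def] tail_emp_mean tail_mean])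
      (use \<mu> mem_goodD(1)[OF good] in \<open>auto intro!: divide_nonneg_nonneg emp_mean_nonneg mean_nonneg
         mult_nonneg_nonneg poisson_weight_nonneg\<close>)
  also have "\<dots> \<le> (4 + 2 * mean (\<lambda>x. x\<^sup>2) + mean (\<lambda>x. x powr \<rho>)) / \<mu> * tol N"
    using \<mu>(1) tol_pos[OF N_pos] mean_nonneg[of "\<lambda>x. x\<^sup>2"] by (simp add: field_simps)
  finally show ?thesis
    by (simp add: cap_eq_emp_mean(4)[OF N_pos] a_def \<mu>_def)
qed

end

lemma eventually_tol_le:
  obtains N0 where "\<And>N. N0 \<le> N \<Longrightarrow> 0 < N \<and> tol N \<le> mean (\<lambda>x. x) / 2"
proof -
  have "tol \<longlonglongrightarrow> 0"
    unfolding tol_def using exponents by (intro tendsto_neg_powr filterlim_real_sequentially) auto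
  then have "\<forall>\<^sub>F N in sequentially. tol N < mean (\<lambda>x. x) / 2"
    using mean_\<Lambda>_pos by (intro order_tendstoD(2)) auto
  then have "\<forall>\<^sub>F N in sequentially. 0 < N \<and> tol N \<le> mean (\<lambda>x. x) / 2"
    using eventually_gt_at_top[of 0] by eventually_elim auto
  then show ?thesis
    using that unfolding eventually_sequentially by blast
qed

lemma cond_C1_good:
  assumes "1 < mean (\<lambda>x. x\<^sup>2) / mean (\<lambda>x. x)"
  shows "cond_C1 (mean (\<lambda>x. x)) (mean (\<lambda>x. x\<^sup>2) / mean (\<lambda>x. x)) (\<lambda>N. (\<lambda>\<omega> i. \<Lambda> i \<omega>) ` good N)"
proof -
  obtain N0 where N0: "\<And>N. N0 \<le> N \<Longrightarrow> 0 < N \<and> tol N \<le> mean (\<lambda>x. x) / 2"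
    using eventually_tol_le by blast
  define C where "C = 1 + (2 * (1 + mean (\<lambda>x. x powr \<rho>)) / mean (\<lambda>x. x)
    + 2 * mean (\<lambda>x. x\<^sup>2) / (mean (\<lambda>x. x))\<^sup>2)"
  have C: "1 \<le> C" "2 * (1 + mean (\<lambda>x. x powr \<rho>)) / mean (\<lambda>x. x)
      + 2 * mean (\<lambda>x. x\<^sup>2) / (mean (\<lambda>x. x))\<^sup>2 \<le> C"
    using mean_\<Lambda>_pos mean_nonneg[of "\<lambda>x. x\<^sup>2"] mean_nonneg[of "\<lambda>x. x powr \<rho>"] by (auto simp: C_def)
  have "\<bar>cap_mu lam N - mean (\<lambda>x. x)\<bar> \<le> C * real N powr - \<kappa> \<and>
      \<bar>cap_nu lam N - mean (\<lambda>x. x\<^sup>2) / mean (\<lambda>x. x)\<bar> \<le> C * real N powr - \<kappa>"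
    if N_ge: "N0 \<le> N" and lam: "lam \<in> (\<lambda>\<omega> i. \<Lambda> i \<omega>) ` good N" for N lam
  proof -
    obtain \<omega> where \<omega>: "\<omega> \<in> good N" "lam = (\<lambda>i. \<Lambda> i \<omega>)"
      using lam by blast
    note N = N0[OF N_ge]
    have "\<bar>cap_mu lam N - mean (\<lambda>x. x)\<bar> \<le> 1 * tol N"
      using mem_goodD(3)[OF \<omega>(1)] cap_eq_emp_mean(1)[of N \<omega>] N unfolding \<omega>(2) by simp
    also have "\<dots> \<le> C * tol N"
      using C(1) tol_pos[of N] N by (intro mult_right_mono) auto
    finally have mu: "\<bar>cap_mu lam N - mean (\<lambda>x. x)\<bar> \<le> C * tol N" .
    have "\<bar>cap_nu lam N - mean (\<lambda>x. x\<^sup>2) / mean (\<lambda>x. x)\<bar>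
        \<le> (2 * (1 + mean (\<lambda>x. x powr \<rho>)) / mean (\<lambda>x. x) + 2 * mean (\<lambda>x. x\<^sup>2) / (mean (\<lambda>x. x))\<^sup>2) * tol N"
      using cap_nu_close[of N \<omega>] \<omega>(1) N unfolding \<omega>(2) by blast
    also have "\<dots> \<le> C * tol N"
      using C(2) tol_pos[of N] N by (intro mult_right_mono) auto
    finally show ?thesis
      using mu by (simp add: tol_def)
  qed
  then show ?thesis
    unfolding cond_C1_def using mean_\<Lambda>_pos assms exponents by blast
qed

lemma cond_C2_good:
  "cond_C2 (\<lambda>n. mean (poisson_weight n)) (\<lambda>n. mean (\<lambda>x. x * poisson_weight n x) / mean (\<lambda>x. x))
    (\<lambda>N. (\<lambda>\<omega> i. \<Lambda> i \<omega>) ` good N)"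
proof -
  obtain N0 where N0: "\<And>N. N0 \<le> N \<Longrightarrow> 0 < N \<and> tol N \<le> mean (\<lambda>x. x) / 2"
    using eventually_tol_le by blast
  define C where "C = max (1 + 2 * mean (\<lambda>x. x))
    ((4 + 2 * mean (\<lambda>x. x\<^sup>2) + mean (\<lambda>x. x powr \<rho>)) / mean (\<lambda>x. x))"
  have "dTV (cap_f lam N) (\<lambda>n. mean (poisson_weight n)) \<le> C * real N powr - \<kappa> \<and>
      dTV (cap_g lam N) (\<lambda>n. mean (\<lambda>x. x * poisson_weight n x) / mean (\<lambda>x. x)) \<le> C * real N powr - \<kappa>"
    if N_ge: "N0 \<le> N" and lam: "lam \<in> (\<lambda>\<omega> i. \<Lambda> i \<omega>) ` good N" for N lam
  proof -
    obtain \<omega> where \<omega>: "\<omega> \<in> good N" "lam = (\<lambda>i. \<Lambda> i \<omega>)"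
      using lam by blast
    note N = N0[OF N_ge]
    have "dTV (cap_f lam N) (\<lambda>n. mean (poisson_weight n)) \<le> (1 + 2 * mean (\<lambda>x. x)) * tol N"
      using dTV_cap_f_le[of N \<omega>] \<omega>(1) N unfolding \<omega>(2) by blast
    also have "\<dots> \<le> C * tol N"
      using tol_pos[of N] N by (intro mult_right_mono) (auto simp: C_def)
    finally have f: "dTV (cap_f lam N) (\<lambda>n. mean (poisson_weight n)) \<le> C * tol N" .
    have "dTV (cap_g lam N) (\<lambda>n. mean (\<lambda>x. x * poisson_weight n x) / mean (\<lambda>x. x))
        \<le> (4 + 2 * mean (\<lambda>x. x\<^sup>2) + mean (\<lambda>x. x powr \<rho>)) / mean (\<lambda>x. x) * tol N"
      using dTV_cap_g_le[of N \<omega>] \<omega>(1) N unfolding \<omega>(2) by blast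
    also have "\<dots> \<le> C * tol N"
      using tol_pos[of N] N by (intro mult_right_mono) (auto simp: C_def)
    finally show ?thesis
      using f by (simp add: tol_def)
  qed
  then show ?thesis
    unfolding cond_C2_def using exponents by blast
qed

lemma cond_C3_good: "cond_C3 (\<lambda>N. (\<lambda>\<omega> i. \<Lambda> i \<omega>) ` good N)"
proof -
  obtain N0 where N0: "\<And>N. N0 \<le> N \<Longrightarrow> 0 < N \<and> tol N \<le> mean (\<lambda>x. x) / 2"
    using eventually_tol_le by blast
  have "\<exists>K N0. \<forall>N\<ge>N0. \<forall>lam\<in>(\<lambda>\<omega> i. \<Lambda> i \<omega>) ` good N.
      (\<Sum>i<N. lam i powr (\<sigma> - \<epsilon>)) / real N \<le> K \<and> (\<forall>i<N. lam i \<le> real N powr (1 / \<sigma> + \<epsilon>))"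
    if \<epsilon>: "0 < \<epsilon>" "1 / \<sigma> + \<epsilon> < 1 / 2" for \<epsilon>
  proof (intro exI ballI allI impI conjI)
    have "0 < 1 / \<sigma>"
      using exponents by simp
    then have "\<epsilon> < \<sigma>"
      using \<epsilon> exponents by linarith
    fix N lam
    assume N_ge: "N0 \<le> N" and lam: "lam \<in> (\<lambda>\<omega> i. \<Lambda> i \<omega>) ` good N"
    obtain \<omega> where \<omega>: "\<omega> \<in> good N" "lam = (\<lambda>i. \<Lambda> i \<omega>)"
      using lam by blast
    note N = N0[OF N_ge]
    show "(\<Sum>i<N. lam i powr (\<sigma> - \<epsilon>)) / real N \<le> 2 + mean (\<lambda>x. x powr \<sigma>)"
      using cap_moment_le[of N \<omega> "\<sigma> - \<epsilon>"] \<omega>(1) N \<open>\<epsilon> < \<sigma>\<close> \<epsilon>(1) unfolding \<omega>(2) by simp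
    fix i
    assume "i < N"
    then have "lam i \<le> level N"
      using mem_goodD(2)[OF \<omega>(1)] unfolding \<omega>(2) by blast
    also have "\<dots> \<le> real N powr (1 / \<sigma> + \<epsilon>)"
      unfolding level_def using N \<epsilon> by (intro powr_mono) auto
    finally show "lam i \<le> real N powr (1 / \<sigma> + \<epsilon>)" .
  qed
  then show ?thesis
    unfolding cond_C3_def using exponents by (intro exI[of _ "\<sigma> + 1"]) simp
qed

end

theorem theorem1p4:
  fixes M :: "'a measure" and \<Lambda> :: "nat \<Rightarrow> 'a \<Rightarrow> real" and c \<tau> :: real
  assumes "prob_space M"
    and meas: "\<And>i. \<Lambda> i \<in> borel_measurable M"
    and indep: "prob_space.indep_vars M (\<lambda>_. borel) \<Lambda> UNIV"
    and ident: "\<And>i. distr M borel (\<Lambda> i) = distr M borel (\<Lambda> 0)"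
    and pos: "\<And>i \<omega>. \<omega> \<in> space M \<Longrightarrow> 0 < \<Lambda> i \<omega>"
    and "0 < c" and "3 < \<tau>"
    and tail: "\<And>x. 0 < x \<Longrightarrow> 1 - measure M {\<omega>\<in>space M. \<Lambda> 0 \<omega> \<le> x} \<le> c * x powr (1 - \<tau>)"
    and nu_gt: "(\<integral>\<omega>. (\<Lambda> 0 \<omega>)^2 \<partial>M) / (\<integral>\<omega>. \<Lambda> 0 \<omega> \<partial>M) > 1"
  shows "\<exists>J :: nat \<Rightarrow> 'a set. (\<forall>N. J N \<in> sets M) \<and>
           (\<lambda>N. measure M (J N)) \<longlonglongrightarrow> 1 \<and>
           (let \<mu> = (\<integral>\<omega>. \<Lambda> 0 \<omega> \<partial>M);
                \<nu> = (\<integral>\<omega>. (\<Lambda> 0 \<omega>)^2 \<partial>M) / (\<integral>\<omega>. \<Lambda> 0 \<omega> \<partial>M);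
                f = (\<lambda>n. \<integral>\<omega>. exp (- \<Lambda> 0 \<omega>) * (\<Lambda> 0 \<omega>)^n / fact n \<partial>M);
                g = (\<lambda>n. (\<integral>\<omega>. exp (- \<Lambda> 0 \<omega>) * (\<Lambda> 0 \<omega>)^(n+1) / fact n \<partial>M) / \<mu>);
                S = (\<lambda>N. (\<lambda>\<omega>. (\<lambda>i. \<Lambda> i \<omega>)) ` J N)
            in cond_C1 \<mu> \<nu> S \<and> cond_C2 f g S \<and> cond_C3 S)"
proof -
  interpret prob_space M
    by fact
  interpret iid_power_tail M \<Lambda> c "\<tau> - 1"
  proof
    show "2 < \<tau> - 1"
      using \<open>3 < \<tau>\<close> by simp
    show "1 - prob {\<omega> \<in> space M. \<Lambda> 0 \<omega> \<le> x} \<le> c * x powr - (\<tau> - 1)" if "0 < x" for x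
      using tail[OF that] by simp
  qed (fact meas indep ident pos)+
  have mean_\<Lambda>: "(\<integral>\<omega>. \<Lambda> 0 \<omega> \<partial>M) = mean (\<lambda>x. x)" "(\<integral>\<omega>. (\<Lambda> 0 \<omega>)^2 \<partial>M) = mean (\<lambda>x. x\<^sup>2)"
    by (simp_all add: mean_def)
  have f: "(\<lambda>n. \<integral>\<omega>. exp (- \<Lambda> 0 \<omega>) * (\<Lambda> 0 \<omega>)^n / fact n \<partial>M) = (\<lambda>n. mean (poisson_weight n))"
    by (simp add: mean_def poisson_weight_def)
  have g: "(\<integral>\<omega>. exp (- \<Lambda> 0 \<omega>) * (\<Lambda> 0 \<omega>)^(n+1) / fact n \<partial>M) = mean (\<lambda>x. x * poisson_weight n x)"
    for n
    by (simp add: mean_def poisson_weight_def mult_ac)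
  have "1 < mean (\<lambda>x. x\<^sup>2) / mean (\<lambda>x. x)"
    using nu_gt unfolding mean_\<Lambda> by simp
  then have C1: "cond_C1 (mean (\<lambda>x. x)) (mean (\<lambda>x. x\<^sup>2) / mean (\<lambda>x. x)) (\<lambda>N. (\<lambda>\<omega> i. \<Lambda> i \<omega>) ` good N)"
    by (rule cond_C1_good)
  show ?thesis
    unfolding Let_def f g mean_\<Lambda>
    by (intro exI[of _ good] conjI allI sets_good prob_good_tendsto_1 C1 cond_C2_good cond_C3_good)
qed

end
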